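(* Let $n\ge 2$ and let $(g_{ij})_{1\le i<j\le n}$ be reals with $g_{il}+g_{jk}>g_{ik}+g_{jl}$ for all $1\le i<j<k<l\le n$ and $g_{il}>g_{ik}+g_{kl}$ for all $1\le i<k<l\le n$. Let $\bar X_g=\{v\in\mathbb{R}^n: v_1=0,\ v_j-v_i\ge g_{ij}\ \forall i<j\}$ and $X_g=\{v\in\bar X_g: v_n-v_1=g_{1n}\}$. For $v\in\bar X_g$ let $E(v)=\{ij: i<j,\ v_j-v_i=g_{ij}\}$. Then $X_g$ is a simple $(n-2)$-dimensional polytope whose face poset is that of the $(n-2)$-dimensional associahedron; $v\mapsto E(v)$ gives a bijection between the vertices of $X_g$ and the non-crossing alternating trees on $\{1,\dots,n\}$, and two vertices are adjacent if and only if the corresponding trees differ in a single edge. Moreover $\bar X_g$ is an unbounded polyhedron with the same vertex set as $X_g$, and its extreme rays correspond to the non-crossing alternating trees with the edge $1n$ removed.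
   Context: A graph on $\{1,\dots,n\}$ is alternating if it has no two edges $ij,jk$ with $i<j<k$; non-crossing if it has no two edges $ik,jl$ with $i<j<k<l$. A non-crossing alternating tree is a spanning tree on $\{1,\dots,n\}$ with both properties. *)

theory Defs
  imports "HOL-Analysis.Analysis"
begin

text \<open>Coordinates are indexed by an abstract finite linearly ordered type 'n,
  playing the role of {1,...,n} (n = CARD('n)); Min UNIV is 1, Max UNIV is n.\<close>

definition first_idx :: "'n::{finite,linorder}" where
  "first_idx = Min UNIV"

definition last_idx :: "'n::{finite,linorder}" where
  "last_idx = Max UNIV"

definition Xbar :: "('n \<Rightarrow> 'n \<Rightarrow> real) \<Rightarrow> (real^'n::{finite,linorder}) set" where
  "Xbar g = {v. v $ first_idx = 0 \<and> (\<forall>i j. i < j \<longrightarrow> v $ j - v $ i \<ge> g i j)}"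

definition Xg :: "('n \<Rightarrow> 'n \<Rightarrow> real) \<Rightarrow> (real^'n::{finite,linorder}) set" where
  "Xg g = {v \<in> Xbar g. v $ last_idx - v $ first_idx = g first_idx last_idx}"

definition Eset :: "('n \<Rightarrow> 'n \<Rightarrow> real) \<Rightarrow> real^'n::{finite,linorder} \<Rightarrow> ('n \<times> 'n) set" where
  "Eset g v = {(i, j). i < j \<and> v $ j - v $ i = g i j}"

definition connected_graph :: "('n \<times> 'n) set \<Rightarrow> bool" where
  "connected_graph T \<longleftrightarrow> (\<forall>x y. (x, y) \<in> (T \<union> T\<inverse>)\<^sup>*)"

definition spanning_tree :: "('n::linorder \<times> 'n) set \<Rightarrow> bool" where
  "spanning_tree T \<longleftrightarrow> T \<subseteq> {(i, j). i < j} \<and> connected_graph T \<and>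
     (\<forall>e\<in>T. \<not> connected_graph (T - {e}))"

definition alternating :: "('n::linorder \<times> 'n) set \<Rightarrow> bool" where
  "alternating T \<longleftrightarrow> \<not> (\<exists>i j k. i < j \<and> j < k \<and> (i, j) \<in> T \<and> (j, k) \<in> T)"

definition noncrossing :: "('n::linorder \<times> 'n) set \<Rightarrow> bool" where
  "noncrossing T \<longleftrightarrow>
     \<not> (\<exists>i j k l. i < j \<and> j < k \<and> k < l \<and> (i, k) \<in> T \<and> (j, l) \<in> T)"

definition nca_tree :: "('n::linorder \<times> 'n) set \<Rightarrow> bool" where
  "nca_tree T \<longleftrightarrow> spanning_tree T \<and> alternating T \<and> noncrossing T"

definition simple_polytope :: "'a::euclidean_space set \<Rightarrow> bool" where
  "simple_polytope P \<longleftrightarrow> polytope P \<and>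
     (\<forall>v. v extreme_point_of P \<longrightarrow> card {F. F facet_of P \<and> v \<in> F} = nat (aff_dim P))"

definition adjacent_vertices :: "'a::euclidean_space set \<Rightarrow> 'a \<Rightarrow> 'a \<Rightarrow> bool" where
  "adjacent_vertices P u w \<longleftrightarrow> u \<noteq> w \<and>
     (\<exists>F. F face_of P \<and> aff_dim F = 1 \<and> u \<in> F \<and> w \<in> F)"

definition extreme_ray_of :: "'a::euclidean_space set \<Rightarrow> 'a set \<Rightarrow> bool" where
  "extreme_ray_of R P \<longleftrightarrow> R face_of P \<and> aff_dim R = 1 \<and> \<not> bounded R"

text \<open>Face poset of the associahedron of the convex (m+1)-gon with vertices 0,...,m
  (dimension m-2): sets of pairwise non-crossing diagonals, ordered by reverse inclusion.\<close>

definition diagonals :: "nat \<Rightarrow> (nat \<times> nat) set" where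
  "diagonals m = {(a, b). a + 2 \<le> b \<and> b \<le> m \<and> (a, b) \<noteq> (0, m)}"

definition noncrossing_diags :: "(nat \<times> nat) set \<Rightarrow> bool" where
  "noncrossing_diags D \<longleftrightarrow>
     \<not> (\<exists>a b c d. (a, b) \<in> D \<and> (c, d) \<in> D \<and> a < c \<and> c < b \<and> b < d)"

definition assoc_faces :: "nat \<Rightarrow> (nat \<times> nat) set set" where
  "assoc_faces m = {D. D \<subseteq> diagonals m \<and> noncrossing_diags D}"

definition face_poset_iso :: "'a::euclidean_space set \<Rightarrow> 'b set set \<Rightarrow> bool" where
  "face_poset_iso P Q \<longleftrightarrow> (\<exists>\<phi>. bij_betw \<phi> {F. F face_of P \<and> F \<noteq> {}} Q \<and>
     (\<forall>F F'. F face_of P \<and> F \<noteq> {} \<and> F' face_of P \<and> F' \<noteq> {} \<longrightarrow>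
        (F \<subseteq> F' \<longleftrightarrow> \<phi> F' \<subseteq> \<phi> F)))"

end

theory Submission
  imports Defs
begin

abbreviation reach :: "('a \<times> 'a) set \<Rightarrow> ('a \<times> 'a) set" where
  "reach T \<equiv> (T \<union> T\<inverse>)\<^sup>*"

lemma reach_sym: "(x, y) \<in> reach T \<Longrightarrow> (y, x) \<in> reach T"
  by (meson sym_Un_converse sym_rtrancl symD)

lemma reach_mono: "(x, y) \<in> reach A \<Longrightarrow> A \<subseteq> B \<Longrightarrow> (x, y) \<in> reach B"
  by (meson Un_mono converse_mono rtrancl_mono subsetD)

definition forest :: "('a \<times> 'a) set \<Rightarrow> bool" where
  "forest T \<longleftrightarrow> (\<forall>e\<in>T. (fst e, snd e) \<notin> reach (T - {e}))"

definition nca_graph :: "('n::linorder \<times> 'n) set \<Rightarrow> bool" where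
  "nca_graph D \<longleftrightarrow> D \<subseteq> {(i, j). i < j} \<and> alternating D \<and> noncrossing D"

lemma nca_graph_subset: "nca_graph D \<Longrightarrow> D' \<subseteq> D \<Longrightarrow> nca_graph D'"
  unfolding nca_graph_def alternating_def noncrossing_def by blast

lemma nca_tree_iff: "nca_tree T \<longleftrightarrow> spanning_tree T \<and> nca_graph T"
  unfolding nca_tree_def nca_graph_def spanning_tree_def by auto

lemma spanning_tree_if_forest:
  assumes "T \<subseteq> {(i, j). i < j}" "forest T" "connected_graph T"
  shows "spanning_tree T"
  using assms unfolding spanning_tree_def forest_def connected_graph_def by fast

lemma spanning_tree_subset_eq:
  assumes "spanning_tree T" "spanning_tree T'" "T \<subseteq> T'"
  shows "T = T'"
proof (rule ccontr)
  assume "T \<noteq> T'"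
  then obtain e where "e \<in> T'" "T \<subseteq> T' - {e}" using assms(3) by auto
  then show False
    using assms(1,2) unfolding spanning_tree_def connected_graph_def by (meson reach_mono)
qed

subsection \<open>Circulations\<close>

definition incidence :: "'a \<times> 'a \<Rightarrow> 'a \<Rightarrow> real" where
  "incidence p z = of_bool (snd p = z) - of_bool (fst p = z)"

lemma reach_imp_flow:
  assumes "finite A" "(x, y) \<in> reach A"
  shows "\<exists>c. \<forall>z. (\<Sum>p\<in>A. c p * incidence p z) = incidence (x, y) z"
  using assms(2)
proof (induction rule: rtrancl_induct)
  case base
  show ?case by (rule exI[of _ "\<lambda>_. 0"]) (simp add: incidence_def)
next
  case (step y w)
  obtain c where c: "\<And>z. (\<Sum>p\<in>A. c p * incidence p z) = incidence (x, y) z"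
    using step.IH by blast
  obtain p0 s where p0: "p0 \<in> A" "\<And>z. s * incidence p0 z = incidence (y, w) z"
  proof (cases "(y, w) \<in> A")
    case True
    then show ?thesis using that[of "(y, w)" 1] by simp
  next
    case False
    then have "(w, y) \<in> A" using step.hyps(2) by auto
    then show ?thesis using that[of "(w, y)" "-1"] by (simp add: incidence_def)
  qed
  define c' where "c' p = c p + (if p = p0 then s else 0)" for p
  have "(\<Sum>p\<in>A. c' p * incidence p z) = incidence (x, w) z" for z
  proof -
    have "(\<Sum>p\<in>A. c' p * incidence p z) = (\<Sum>p\<in>A. c p * incidence p z) + s * incidence p0 z"
      using p0(1) assms(1)
      by (simp add: c'_def distrib_right sum.distrib if_distrib[of "\<lambda>x. x * _"] cong: if_cong)
    also have "\<dots> = incidence (x, y) z + incidence (y, w) z"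
      by (simp only: c p0(2))
    finally show ?thesis by (simp add: incidence_def)
  qed
  then show ?case by blast
qed

lemma sum_eq_0_other_nonzero:
  fixes h :: "'a \<Rightarrow> real"
  assumes "finite A" "sum h A = 0" "q \<in> A" "h q \<noteq> 0"
  shows "\<exists>p\<in>A. p \<noteq> q \<and> h p \<noteq> 0"
proof -
  have "sum h (A - {q}) \<noteq> 0" using assms sum.remove[of A q h] by simp
  then obtain p where "p \<in> A - {q}" "h p \<noteq> 0" by (meson sum.neutral)
  then show ?thesis by blast
qed

lemma circulation_other_edge:
  assumes "finite T" "(\<Sum>p\<in>T. c p * incidence p z) = 0" "q \<in> T" "c q \<noteq> 0"
    "fst q \<noteq> snd q" "z = fst q \<or> z = snd q"
  obtains p where "p \<in> T" "p \<noteq> q" "c p \<noteq> 0" "fst p = z \<or> snd p = z"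
proof -
  have "c q * incidence q z \<noteq> 0" using assms(4-6) by (auto simp: incidence_def)
  then obtain p where "p \<in> T" "p \<noteq> q" "c p * incidence p z \<noteq> 0"
    using sum_eq_0_other_nonzero[OF assms(1-3)] by blast
  moreover have "fst p = z \<or> snd p = z"
    using \<open>c p * incidence p z \<noteq> 0\<close> by (cases "fst p = z"; cases "snd p = z") (auto simp: incidence_def)
  ultimately show thesis using that by simp
qed

text \<open>Pick an edge ij with nonzero flow that is as short as possible. By alternation, all edges at i
  leave i and all edges at j enter j, so conservation forces further nonzero edges ik and mj; by
  minimality, m < i < j < k, and the two edges cross.\<close>

lemma nca_graph_circulation_eq_0:
  fixes T :: "('n::{finite,linorder} \<times> 'n) set"
  assumes nca: "nca_graph T" and circ: "\<And>z. (\<Sum>p\<in>T. c p * incidence p z) = 0" and "e \<in> T"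
  shows "c e = 0"
proof (rule ccontr)
  assume "c e \<noteq> 0"
  define len where "len p = card {fst p..snd p}" for p :: "'n \<times> 'n"
  obtain i j where ij: "(i, j) \<in> T" "c (i, j) \<noteq> 0"
    and shortest: "\<And>p. p \<in> T \<Longrightarrow> c p \<noteq> 0 \<Longrightarrow> len (i, j) \<le> len p"
    using ex_has_least_nat[of "\<lambda>p. p \<in> T \<and> c p \<noteq> 0" e len] \<open>e \<in> T\<close> \<open>c e \<noteq> 0\<close> by auto
  have lt: "\<And>a b. (a, b) \<in> T \<Longrightarrow> a < b"
    and alt: "\<And>a b d. (a, b) \<in> T \<Longrightarrow> (b, d) \<in> T \<Longrightarrow> a < b \<Longrightarrow> b < d \<Longrightarrow> False"
    and cross: "\<And>a b d f. (a, d) \<in> T \<Longrightarrow> (b, f) \<in> T \<Longrightarrow> a < b \<Longrightarrow> b < d \<Longrightarrow> d < f \<Longrightarrow> False"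
    using nca unfolding nca_graph_def alternating_def noncrossing_def by blast+
  have shorter: "\<not> len (a, b) < len (i, j)" if "(a, b) \<in> T" "c (a, b) \<noteq> 0" for a b
    using shortest[OF that] by simp
  have len_less: "len (a, b) < len (i, j)" if "a < b" "i \<le> a" "b \<le> j" "(a, b) \<noteq> (i, j)" for a b
    unfolding len_def using that by (intro psubset_card_mono) auto
  obtain p where p: "p \<in> T" "p \<noteq> (i, j)" "c p \<noteq> 0" "fst p = i \<or> snd p = i"
    using circulation_other_edge[OF _ circ ij(1,2)] lt[OF ij(1)] by auto
  obtain k where ik: "(i, k) \<in> T" "k \<noteq> j" "c (i, k) \<noteq> 0"
    using p alt[of "fst p" i j] lt[of "fst p" "snd p"] lt[OF ij(1)] ij(1) by (cases p) auto
  have "j < k"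
  proof (rule ccontr)
    assume "\<not> j < k"
    then show False using shorter[OF ik(1,3)] len_less[of i k] lt[OF ik(1)] ik(2) by simp
  qed
  obtain q where q: "q \<in> T" "q \<noteq> (i, j)" "c q \<noteq> 0" "fst q = j \<or> snd q = j"
    using circulation_other_edge[OF _ circ ij(1,2)] lt[OF ij(1)] by auto
  obtain m where mj: "(m, j) \<in> T" "m \<noteq> i" "c (m, j) \<noteq> 0"
    using q alt[of i j "snd q"] lt[of "fst q" "snd q"] lt[OF ij(1)] ij(1) by (cases q) auto
  have "m < i"
  proof (rule ccontr)
    assume "\<not> m < i"
    then show False using shorter[OF mj(1,3)] len_less[of m j] lt[OF mj(1)] mj(2) by simp
  qed
  show False using cross[OF mj(1) ik(1) \<open>m < i\<close>] lt[OF ij(1)] \<open>j < k\<close> by blast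
qed

lemma nca_graph_forest:
  fixes T :: "('n::{finite,linorder} \<times> 'n) set"
  assumes "nca_graph T"
  shows "forest T"
  unfolding forest_def
proof (intro ballI notI)
  fix e assume "e \<in> T" and "(fst e, snd e) \<in> reach (T - {e})"
  then obtain c where c: "\<And>z. (\<Sum>p\<in>T - {e}. c p * incidence p z) = incidence e z"
    using reach_imp_flow[of "T - {e}" "fst e" "snd e"] by auto
  define c' where "c' = c(e := -1)"
  have "(\<Sum>p\<in>T. c' p * incidence p z) = 0" for z
  proof -
    have "(\<Sum>p\<in>T - {e}. c' p * incidence p z) = (\<Sum>p\<in>T - {e}. c p * incidence p z)"
      by (intro sum.cong) (auto simp: c'_def)
    then show ?thesis using \<open>e \<in> T\<close> by (simp add: sum.remove c c'_def)
  qed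
  then have "c' e = 0" using nca_graph_circulation_eq_0[OF assms] \<open>e \<in> T\<close> by blast
  then show False by (simp add: c'_def)
qed

lemma nca_tree_forest:
  fixes T :: "('n::{finite,linorder} \<times> 'n) set"
  shows "nca_tree T \<Longrightarrow> forest T"
  unfolding nca_tree_iff using nca_graph_forest by blast

lemma nca_tree_connected: "nca_tree T \<Longrightarrow> connected_graph T"
  by (simp add: nca_tree_def spanning_tree_def)

lemma first_idx_le: "(first_idx :: 'n::{finite,linorder}) \<le> i"
  unfolding first_idx_def by simp

lemma le_last_idx: "i \<le> (last_idx :: 'n::{finite,linorder})"
  unfolding last_idx_def by simp

abbreviation outer_edge :: "'n::{finite,linorder} \<times> 'n" where
  "outer_edge \<equiv> (first_idx, last_idx)"

lemma first_idx_less_last_idx: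
  assumes "CARD('n::{finite,linorder}) \<ge> 2"
  shows "(first_idx :: 'n) < last_idx"
proof (rule ccontr)
  assume "\<not> (first_idx :: 'n) < last_idx"
  then have "x = first_idx" for x :: 'n
    using first_idx_le[of x] le_last_idx[of x] by order
  then have "(UNIV :: 'n set) = {first_idx}" by auto
  then show False using assms card_1_singleton_iff[of "UNIV :: 'n set"] by auto
qed

definition edge_diff :: "real^'n::finite \<Rightarrow> 'n \<times> 'n \<Rightarrow> real" where
  "edge_diff v p = v $ snd p - v $ fst p"

lemma edge_diff_add [simp]: "edge_diff (v + w) p = edge_diff v p + edge_diff w p"
  and edge_diff_diff [simp]: "edge_diff (v - w) p = edge_diff v p - edge_diff w p"
  and edge_diff_scaleR [simp]: "edge_diff (c *\<^sub>R v) p = c * edge_diff v p"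
  and edge_diff_zero [simp]: "edge_diff 0 p = 0"
  and edge_diff_sum: "edge_diff (sum f A) p = (\<Sum>a\<in>A. edge_diff (f a) p)"
  by (simp_all add: edge_diff_def algebra_simps sum_subtractf)

lemma edge_diff_eq_0_imp_eq_0:
  assumes "connected_graph T" "\<forall>p\<in>T. edge_diff z p = 0" "z $ first_idx = 0"
  shows "z = 0"
proof -
  have "z $ y = z $ x" if "(x, y) \<in> reach T" for x y
    using that by (induction rule: rtrancl_induct) (use assms(2) in \<open>force simp: edge_diff_def\<close>)+
  then have "z $ i = z $ first_idx" for i
    using assms(1) unfolding connected_graph_def by blast
  then show ?thesis using assms(3) by (simp add: vec_eq_iff)
qed

text \<open>For a forest T and e \<in> T, removing e splits the component of e in two; the cut vector is
  the indicator of the side containing snd e, shifted to vanish at first_idx.\<close>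

definition cut_vector :: "('n \<times> 'n) set \<Rightarrow> 'n \<times> 'n \<Rightarrow> real^'n::{finite,linorder}" where
  "cut_vector T e = (\<chi> k. of_bool ((snd e, k) \<in> reach (T - {e}))
     - of_bool ((snd e, first_idx) \<in> reach (T - {e})))"

lemma cut_vector_first_idx [simp]: "cut_vector T e $ first_idx = 0"
  by (simp add: cut_vector_def)

lemma abs_edge_diff_cut_vector_le: "\<bar>edge_diff (cut_vector T e) p\<bar> \<le> 1"
  by (simp add: edge_diff_def cut_vector_def of_bool_def)

lemma edge_diff_cut_vector:
  assumes "forest T" "e \<in> T" "p \<in> T"
  shows "edge_diff (cut_vector T e) p = of_bool (p = e)"
proof (cases "p = e")
  case True
  have "(snd e, fst e) \<notin> reach (T - {e})"
    using assms(1,2) reach_sym[of "snd e" "fst e" "T - {e}"] unfolding forest_def by blast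
  then show ?thesis using True by (simp add: edge_diff_def cut_vector_def)
next
  case False
  then have "(fst p, snd p) \<in> (T - {e}) \<union> (T - {e})\<inverse>" "(snd p, fst p) \<in> (T - {e}) \<union> (T - {e})\<inverse>"
    using assms(3) by auto
  then have "(snd e, fst p) \<in> reach (T - {e}) \<longleftrightarrow> (snd e, snd p) \<in> reach (T - {e})"
    by (meson rtrancl_into_rtrancl)
  then show ?thesis using False by (simp add: edge_diff_def cut_vector_def)
qed

lemma vec_eq_sum_cut_vectors:
  assumes "connected_graph T" "forest T" "v $ first_idx = 0"
  shows "v = (\<Sum>e\<in>T. edge_diff v e *\<^sub>R cut_vector T e)"
proof -
  have "edge_diff (\<Sum>e\<in>T. edge_diff v e *\<^sub>R cut_vector T e) p = edge_diff v p" if "p \<in> T" for p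
  proof -
    have "T \<inter> {e. p = e} = {p}" using that by auto
    then show ?thesis
      using that by (simp add: edge_diff_sum edge_diff_cut_vector[OF assms(2)] eq_commute[of _ p])
  qed
  then have "v - (\<Sum>e\<in>T. edge_diff v e *\<^sub>R cut_vector T e) = 0"
    using assms(1,3) by (intro edge_diff_eq_0_imp_eq_0) (auto simp: sum_component)
  then show ?thesis by simp
qed

lemma inj_on_cut_vector:
  assumes "forest T"
  shows "inj_on (cut_vector T) T"
proof (rule inj_onI)
  fix e e' assume "e \<in> T" "e' \<in> T" "cut_vector T e = cut_vector T e'"
  then show "e = e'"
    using edge_diff_cut_vector[OF assms, of e e] edge_diff_cut_vector[OF assms, of e' e] by simp
qed

lemma independent_cut_vectors:
  assumes "forest T" "A \<subseteq> T"
  shows "independent (cut_vector T ` A)"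
proof (rule independent_if_scalars_zero)
  fix f x assume sum0: "(\<Sum>x\<in>cut_vector T ` A. f x *\<^sub>R x) = 0" and "x \<in> cut_vector T ` A"
  then obtain e0 where e0: "e0 \<in> A" "x = cut_vector T e0" by auto
  have inj: "inj_on (cut_vector T) A"
    using inj_on_cut_vector[OF assms(1)] assms(2) by (rule inj_on_subset)
  have "0 = edge_diff (\<Sum>e\<in>A. f (cut_vector T e) *\<^sub>R cut_vector T e) e0"
    using sum0 by (simp add: sum.reindex[OF inj])
  also have "\<dots> = (\<Sum>e\<in>A. f (cut_vector T e) * of_bool (e0 = e))"
    unfolding edge_diff_sum edge_diff_scaleR using e0(1)
    by (intro sum.cong refl) (simp add: edge_diff_cut_vector[OF assms(1)] subsetD[OF assms(2)])
  also have "\<dots> = f x"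
  proof -
    have "A \<inter> {e. e0 = e} = {e0}" using e0(1) by auto
    then show ?thesis using e0(2) by simp
  qed
  finally show "f x = 0" by simp
qed simp

lemma card_connected_forest:
  fixes T :: "('n::{finite,linorder} \<times> 'n) set"
  assumes "connected_graph T" "forest T"
  shows "card T = CARD('n) - 1"
proof -
  define H where "H = {x. axis (first_idx :: 'n) (1 :: real) \<bullet> x = 0}"
  have H: "x \<in> H \<longleftrightarrow> x $ first_idx = 0" for x
    by (simp add: H_def inner_axis')
  have "span (cut_vector T ` T) = H"
  proof
    show "span (cut_vector T ` T) \<subseteq> H"
      unfolding H_def by (intro span_minimal subspace_hyperplane) (auto simp: inner_axis')
    show "H \<subseteq> span (cut_vector T ` T)"
    proof
      fix x assume "x \<in> H"
      then have "x = (\<Sum>e\<in>T. edge_diff x e *\<^sub>R cut_vector T e)"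
        using vec_eq_sum_cut_vectors[OF assms] H by blast
      also have "\<dots> \<in> span (cut_vector T ` T)"
        by (intro span_sum span_scale span_base) auto
      finally show "x \<in> span (cut_vector T ` T)" .
    qed
  qed
  then have "dim H = card T"
    using dim_span_eq_card_independent[OF independent_cut_vectors[OF assms(2) order_refl]]
      card_image[OF inj_on_cut_vector[OF assms(2)]] by simp
  moreover have "dim H = CARD('n) - 1"
    unfolding H_def by (subst dim_hyperplane) (auto simp: axis_eq_0_iff)
  ultimately show ?thesis by simp
qed

lemma card_nca_tree:
  fixes T :: "('n::{finite,linorder} \<times> 'n) set"
  assumes "nca_tree T"
  shows "card T = CARD('n) - 1"
  using card_connected_forest[OF nca_tree_connected[OF assms] nca_tree_forest[OF assms]] .

lemma nca_graph_split:
  fixes D :: "('n::{finite,linorder} \<times> 'n) set"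
  assumes nca: "nca_graph D" and D: "D \<subseteq> {a..b} \<times> {a..b}" and "a < b"
  obtains k where "a \<le> k" "k < b" "a < k \<Longrightarrow> (a, k) \<in> D"
    "\<And>i j. (i, j) \<in> D \<Longrightarrow> (i, j) \<noteq> (a, b) \<Longrightarrow> j \<le> k \<or> k < i"
proof -
  have lt: "\<And>i j. (i, j) \<in> D \<Longrightarrow> i < j"
    and alt: "\<And>i j k. (i, j) \<in> D \<Longrightarrow> (j, k) \<in> D \<Longrightarrow> i < j \<Longrightarrow> j < k \<Longrightarrow> False"
    and cross: "\<And>i j k l. (i, k) \<in> D \<Longrightarrow> (j, l) \<in> D \<Longrightarrow> i < j \<Longrightarrow> j < k \<Longrightarrow> k < l \<Longrightarrow> False"
    using nca unfolding nca_graph_def alternating_def noncrossing_def by blast+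
  define K where "K = {c. c < b \<and> (a, c) \<in> D}"
  define k where "k = (if K = {} then a else Max K)"
  have K_le: "c \<le> k" if "c \<in> K" for c
    using that by (auto simp: k_def intro: Max_ge)
  have k: "a \<le> k" "k < b" "a < k \<Longrightarrow> (a, k) \<in> D"
  proof (atomize (full), cases "K = {}")
    case True
    then show "a \<le> k \<and> k < b \<and> (a < k \<longrightarrow> (a, k) \<in> D)" using \<open>a < b\<close> by (simp add: k_def)
  next
    case False
    then have "k \<in> K" using Max_in[of K] by (simp add: k_def)
    then have "(a, k) \<in> D" "k < b" by (simp_all add: K_def)
    then show "a \<le> k \<and> k < b \<and> (a < k \<longrightarrow> (a, k) \<in> D)" using lt[of a k] by simp
  qed
  have "j \<le> k \<or> k < i" if ij: "(i, j) \<in> D" "(i, j) \<noteq> (a, b)" for i j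
  proof (rule ccontr)
    assume "\<not> (j \<le> k \<or> k < i)"
    then have "i \<le> k" "k < j" by auto
    have "a \<le> i" "j \<le> b" using D ij(1) by auto
    consider "i = a" | "a < i" "i = k" | "a < i" "i < k"
      using \<open>a \<le> i\<close> \<open>i \<le> k\<close> by (metis order_le_less)
    then show False
    proof cases
      case 1
      then have "j < b" using ij(2) \<open>j \<le> b\<close> by (simp add: order_le_less)
      then have "j \<in> K" using ij(1) 1 by (simp add: K_def)
      then show False using K_le \<open>k < j\<close> by (meson leD)
    next
      case 2
      then have "(a, k) \<in> D" "(k, j) \<in> D" using k(3) ij(1) by simp_all
      then show False using alt 2 \<open>k < j\<close> by blast
    next
      case 3
      then have "(a, k) \<in> D" using k(3) by simp
      then show False using cross ij(1) 3 \<open>k < j\<close> by blast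
    qed
  qed
  then show thesis using that k by blast
qed

lemma card_Diff_eq_1_if_card_eq:
  assumes "finite A" "finite B" "card A = card B" "A \<noteq> B" "S \<subseteq> B" "card (A - S) = 1"
  shows "card (A - B) = 1"
proof -
  have "card (A - B) \<le> card (A - S)"
    using assms(1,5) by (intro card_mono) auto
  moreover have "A - B \<noteq> {}"
  proof
    assume "A - B = {}"
    then have "A = B" using card_subset_eq[OF assms(2) _ assms(3)] by blast
    then show False using assms(4) by contradiction
  qed
  then have "0 < card (A - B)" using assms(1) by (simp add: card_gt_0_iff)
  ultimately show ?thesis using assms(6) by linarith
qed

definition index_of :: "'n::{finite,linorder} \<Rightarrow> nat" where
  "index_of i = card {k. k < i}"

lemma index_of_less_iff: "index_of i < index_of j \<longleftrightarrow> i < j"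
proof
  assume "i < j"
  then have "{k. k < i} \<subset> {k. k < j}"
    by (auto dest: order.strict_trans[OF _ \<open>i < j\<close>])
  then show "index_of i < index_of j" unfolding index_of_def by (rule psubset_card_mono[rotated]) simp
next
  assume less: "index_of i < index_of j"
  show "i < j"
  proof (rule ccontr)
    assume "\<not> i < j"
    then have "{k. k < j} \<subseteq> {k. k < i}" by (auto dest: order.strict_trans2)
    then have "index_of j \<le> index_of i" unfolding index_of_def by (rule card_mono[rotated]) simp
    then show False using less by simp
  qed
qed

lemma index_of_le_iff: "index_of i \<le> index_of j \<longleftrightarrow> i \<le> j"
  using index_of_less_iff[of j i] by (metis not_less)

lemma inj_index_of: "inj index_of"
  by (rule injI) (metis index_of_le_iff order.antisym order.refl)

lemma range_index_of: "range (index_of :: 'n::{finite,linorder} \<Rightarrow> nat) = {..<CARD('n)}"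
proof (rule card_subset_eq)
  show "range (index_of :: 'n \<Rightarrow> nat) \<subseteq> {..<CARD('n)}"
    unfolding index_of_def by (auto intro!: psubset_card_mono)
  show "card (range (index_of :: 'n \<Rightarrow> nat)) = card {..<CARD('n)}"
    using card_image[OF inj_index_of] by simp
qed simp

lemma index_of_less_card: "index_of (i :: 'n::{finite,linorder}) < CARD('n)"
  using range_index_of by blast

lemma index_of_first_idx: "index_of (first_idx :: 'n::{finite,linorder}) = 0"
proof -
  have "{k :: 'n. k < first_idx} = {}" using leD[OF first_idx_le] by auto
  then show ?thesis by (simp add: index_of_def)
qed

lemma index_of_last_idx: "index_of (last_idx :: 'n::{finite,linorder}) = CARD('n) - 1"
proof -
  have "{k. k < (last_idx :: 'n)} = UNIV - {last_idx}"
    using le_last_idx by (auto simp: order_le_less)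
  then show ?thesis by (simp add: index_of_def card_Diff_singleton)
qed

text \<open>The edge ij of the vertex set {1..n} corresponds to the diagonal (i - 1, j) of the
  (n+1)-gon with vertices 0..n; the outer edge 1n goes to its excluded side (0, n).\<close>

definition diagonal_of :: "'n::{finite,linorder} \<times> 'n \<Rightarrow> nat \<times> nat" where
  "diagonal_of p = (index_of (fst p), Suc (index_of (snd p)))"

lemma inj_diagonal_of: "inj (diagonal_of :: 'n::{finite,linorder} \<times> 'n \<Rightarrow> nat \<times> nat)"
proof (rule injI)
  fix p q :: "'n \<times> 'n" assume "diagonal_of p = diagonal_of q"
  then have "index_of (fst p) = index_of (fst q)" "index_of (snd p) = index_of (snd q)"
    by (simp_all add: diagonal_of_def)
  then have "fst p = fst q" "snd p = snd q" using injD[OF inj_index_of] by blast+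
  then show "p = q" by (simp add: prod_eq_iff)
qed

lemma diagonal_of_eq_outer_iff:
  "diagonal_of (i, j) = (0, CARD('n)) \<longleftrightarrow> (i, j) = (outer_edge :: 'n::{finite,linorder} \<times> 'n)"
proof -
  have "index_of i = 0 \<longleftrightarrow> i = first_idx"
    using injD[OF inj_index_of, of i first_idx] index_of_first_idx by auto
  moreover have "Suc (index_of j) = CARD('n) \<longleftrightarrow> j = last_idx"
    using injD[OF inj_index_of, of j last_idx] index_of_last_idx[where 'n = 'n]
      zero_less_card_finite[where 'a = 'n] by auto
  ultimately show ?thesis by (simp add: diagonal_of_def)
qed

lemma diagonal_of_image_edges:
  "diagonal_of ` ({(i, j). i < j} - {outer_edge :: 'n::{finite,linorder} \<times> 'n}) = diagonals CARD('n)"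
proof (intro subset_antisym subsetI)
  fix d assume "d \<in> diagonal_of ` ({(i, j). i < j} - {outer_edge :: 'n \<times> 'n})"
  then obtain i j :: 'n where "i < j" "(i, j) \<noteq> outer_edge" "d = diagonal_of (i, j)" by auto
  then show "d \<in> diagonals CARD('n)"
    using index_of_less_iff[of i j] index_of_less_card[of j] diagonal_of_eq_outer_iff[of i j]
    by (auto simp: diagonals_def diagonal_of_def)
next
  fix d assume "d \<in> diagonals CARD('n)"
  then obtain a b where d: "d = (a, b)" "a + 2 \<le> b" "b \<le> CARD('n)" "(a, b) \<noteq> (0, CARD('n))"
    by (auto simp: diagonals_def)
  then have "a \<in> range (index_of :: 'n \<Rightarrow> nat)" "b - 1 \<in> range (index_of :: 'n \<Rightarrow> nat)"
    unfolding range_index_of by auto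
  then obtain i j :: 'n where ij: "a = index_of i" "b - 1 = index_of j" by blast
  then have "index_of i < index_of j" using d(2) by linarith
  then have "i < j" by (simp add: index_of_less_iff)
  moreover have "diagonal_of (i, j) = d" using ij d(1,2) by (simp add: diagonal_of_def)
  moreover have "(i, j) \<noteq> outer_edge"
    using d(1,4) \<open>diagonal_of (i, j) = d\<close> diagonal_of_eq_outer_iff[of i j] by auto
  ultimately have "(i, j) \<in> {(i, j). i < j} - {outer_edge}" "diagonal_of (i, j) = d" by simp_all
  then show "d \<in> diagonal_of ` ({(i, j). i < j} - {outer_edge :: 'n \<times> 'n})" by (metis imageI)
qed

lemma nca_graph_iff_no_overlap:
  assumes "S \<subseteq> {(i, j). i < j}"
  shows "nca_graph S \<longleftrightarrow> (\<forall>p\<in>S. \<forall>q\<in>S. \<not> (fst p < fst q \<and> fst q \<le> snd p \<and> snd p < snd q))"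
proof
  assume nca: "nca_graph S"
  show "\<forall>p\<in>S. \<forall>q\<in>S. \<not> (fst p < fst q \<and> fst q \<le> snd p \<and> snd p < snd q)"
  proof (intro ballI notI)
    fix p q assume "p \<in> S" "q \<in> S" "fst p < fst q \<and> fst q \<le> snd p \<and> snd p < snd q"
    moreover obtain i j k l where "p = (i, j)" "q = (k, l)" by (cases p, cases q)
    ultimately have pq: "(i, j) \<in> S" "(k, l) \<in> S" "i < k" "k \<le> j" "j < l" by auto
    then consider "k = j" | "k < j" by (auto simp: order_le_less)
    then show False
    proof cases
      case 1
      then show False using nca pq unfolding nca_graph_def alternating_def by blast
    next
      case 2
      then show False using nca pq unfolding nca_graph_def noncrossing_def by blast
    qed
  qed
next
  assume no: "\<forall>p\<in>S. \<forall>q\<in>S. \<not> (fst p < fst q \<and> fst q \<le> snd p \<and> snd p < snd q)"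
  have "alternating S"
    unfolding alternating_def
  proof clarify
    fix i j k assume "i < j" "j < k" "(i, j) \<in> S" "(j, k) \<in> S"
    then show False using no by fastforce
  qed
  moreover have "noncrossing S"
    unfolding noncrossing_def
  proof clarify
    fix i j k l assume "i < j" "j < k" "k < l" "(i, k) \<in> S" "(j, l) \<in> S"
    then show False using no less_imp_le[OF \<open>j < k\<close>] by fastforce
  qed
  ultimately show "nca_graph S" using assms by (simp add: nca_graph_def)
qed

lemma noncrossing_diags_image_iff:
  "noncrossing_diags (f ` S) \<longleftrightarrow> (\<forall>p\<in>S. \<forall>q\<in>S.
     \<not> (fst (f p) < fst (f q) \<and> fst (f q) < snd (f p) \<and> snd (f p) < snd (f q)))"
proof
  assume nc: "noncrossing_diags (f ` S)"
  show "\<forall>p\<in>S. \<forall>q\<in>S. \<not> (fst (f p) < fst (f q) \<and> fst (f q) < snd (f p) \<and> snd (f p) < snd (f q))"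
  proof (intro ballI notI)
    fix p q assume "p \<in> S" "q \<in> S"
      and cross: "fst (f p) < fst (f q) \<and> fst (f q) < snd (f p) \<and> snd (f p) < snd (f q)"
    have "(fst (f p), snd (f p)) \<in> f ` S" "(fst (f q), snd (f q)) \<in> f ` S"
      using \<open>p \<in> S\<close> \<open>q \<in> S\<close> by simp_all
    then show False using nc cross unfolding noncrossing_diags_def by blast
  qed
next
  assume no_cross: "\<forall>p\<in>S. \<forall>q\<in>S. \<not> (fst (f p) < fst (f q) \<and> fst (f q) < snd (f p) \<and> snd (f p) < snd (f q))"
  show "noncrossing_diags (f ` S)"
    unfolding noncrossing_diags_def
  proof (intro notI, elim exE conjE)
    fix a b c d assume ab: "(a, b) \<in> f ` S" and cd: "(c, d) \<in> f ` S" and "a < c" "c < b" "b < d"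
    obtain p where "p \<in> S" "f p = (a, b)" using ab by force
    moreover obtain q where "q \<in> S" "f q = (c, d)" using cd by force
    ultimately show False using no_cross \<open>a < c\<close> \<open>c < b\<close> \<open>b < d\<close> by force
  qed
qed

lemma diagonal_of_cross_iff:
  "fst (diagonal_of p) < fst (diagonal_of q) \<and> fst (diagonal_of q) < snd (diagonal_of p)
     \<and> snd (diagonal_of p) < snd (diagonal_of q) \<longleftrightarrow> fst p < fst q \<and> fst q \<le> snd p \<and> snd p < snd q"
  by (simp add: diagonal_of_def index_of_less_iff index_of_le_iff less_Suc_eq_le Suc_le_eq)

lemma nca_graph_iff_noncrossing_diags:
  fixes S :: "('n::{finite,linorder} \<times> 'n) set"
  assumes "S \<subseteq> {(i, j). i < j}"
  shows "nca_graph S \<longleftrightarrow> noncrossing_diags (diagonal_of ` S)"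
  unfolding nca_graph_iff_no_overlap[OF assms] noncrossing_diags_image_iff diagonal_of_cross_iff ..

lemma nca_graph_insert_outer_edge:
  fixes S :: "('n::{finite,linorder} \<times> 'n) set"
  assumes "nca_graph S" "CARD('n) \<ge> 2"
  shows "nca_graph (insert outer_edge S)"
proof -
  have "\<not> last_idx < k" "\<not> k < first_idx" for k :: 'n
    using leD[OF le_last_idx] leD[OF first_idx_le] by blast+
  then show ?thesis
    using assms first_idx_less_last_idx[OF assms(2)]
    unfolding nca_graph_def alternating_def noncrossing_def by blast
qed

lemma bij_betw_assoc_faces:
  assumes "CARD('n::{finite,linorder}) \<ge> 2"
  shows "bij_betw (\<lambda>S. diagonal_of ` (S - {outer_edge}))
    {S :: ('n \<times> 'n) set. nca_graph S \<and> outer_edge \<in> S} (assoc_faces CARD('n))"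
proof (rule bij_betw_imageI)
  show "inj_on (\<lambda>S. diagonal_of ` (S - {outer_edge})) {S :: ('n \<times> 'n) set. nca_graph S \<and> outer_edge \<in> S}"
  proof (rule inj_onI)
    fix S S' :: "('n \<times> 'n) set"
    assume "S \<in> {S. nca_graph S \<and> outer_edge \<in> S}" "S' \<in> {S. nca_graph S \<and> outer_edge \<in> S}"
      and eq: "diagonal_of ` (S - {outer_edge}) = diagonal_of ` (S' - {outer_edge})"
    then have "outer_edge \<in> S" "outer_edge \<in> S'" by simp_all
    moreover have "S - {outer_edge} = S' - {outer_edge}"
      using eq by (simp add: inj_image_eq_iff[OF inj_diagonal_of])
    ultimately show "S = S'" by (metis insert_Diff)
  qed
  show "(\<lambda>S. diagonal_of ` (S - {outer_edge})) ` {S :: ('n \<times> 'n) set. nca_graph S \<and> outer_edge \<in> S}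
    = assoc_faces CARD('n)"
  proof (intro subset_antisym subsetI)
    fix D assume "D \<in> (\<lambda>S. diagonal_of ` (S - {outer_edge})) ` {S :: ('n \<times> 'n) set. nca_graph S \<and> outer_edge \<in> S}"
    then obtain S :: "('n \<times> 'n) set" where S: "nca_graph S" "D = diagonal_of ` (S - {outer_edge})"
      by blast
    then have sub: "S - {outer_edge} \<subseteq> {(i, j). i < j} - {outer_edge}" by (auto simp: nca_graph_def)
    then have "D \<subseteq> diagonals CARD('n)"
      using S(2) diagonal_of_image_edges[where 'n = 'n] by (metis image_mono)
    moreover have "noncrossing_diags D"
      using S nca_graph_iff_noncrossing_diags[of "S - {outer_edge}"] nca_graph_subset[OF S(1), of "S - {outer_edge}"]
        sub by auto
    ultimately show "D \<in> assoc_faces CARD('n)" by (simp add: assoc_faces_def)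
  next
    fix D assume "D \<in> assoc_faces CARD('n)"
    then have D: "D \<subseteq> diagonals CARD('n)" "noncrossing_diags D" by (auto simp: assoc_faces_def)
    define S0 where "S0 = {p \<in> {(i, j). i < j} - {outer_edge :: 'n \<times> 'n}. diagonal_of p \<in> D}"
    have "diagonal_of ` S0 = D"
    proof (intro subset_antisym subsetI)
      fix x assume "x \<in> D"
      then have "x \<in> diagonal_of ` ({(i, j). i < j} - {outer_edge :: 'n \<times> 'n})"
        using D(1) diagonal_of_image_edges[where 'n = 'n] by blast
      then obtain p where "p \<in> {(i, j). i < j} - {outer_edge :: 'n \<times> 'n}" "x = diagonal_of p" by blast
      then have "p \<in> S0" "x = diagonal_of p" using \<open>x \<in> D\<close> by (simp_all add: S0_def)
      then show "x \<in> diagonal_of ` S0" by blast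
    qed (auto simp: S0_def)
    moreover have "S0 \<subseteq> {(i, j). i < j}" "outer_edge \<notin> S0" by (auto simp: S0_def)
    ultimately have "nca_graph (insert outer_edge S0)" "insert outer_edge S0 - {outer_edge} = S0"
      using nca_graph_iff_noncrossing_diags[of S0] D(2) nca_graph_insert_outer_edge[OF _ assms] by auto
    then show "D \<in> (\<lambda>S. diagonal_of ` (S - {outer_edge})) ` {S :: ('n \<times> 'n) set. nca_graph S \<and> outer_edge \<in> S}"
      using \<open>diagonal_of ` S0 = D\<close> by (intro image_eqI[of _ _ "insert outer_edge S0"]) auto
  qed
qed

lemma exists_pos_mult_less:
  fixes a b :: "'a \<Rightarrow> real"
  assumes "finite Q" "\<And>p. p \<in> Q \<Longrightarrow> 0 < b p"
  obtains \<epsilon> where "0 < \<epsilon>" "\<And>p. p \<in> Q \<Longrightarrow> \<epsilon> * a p < b p"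
proof -
  have "\<forall>p\<in>Q. eventually (\<lambda>\<epsilon>. \<epsilon> * a p < b p) (at_right 0)"
  proof
    fix p assume "p \<in> Q"
    have "((\<lambda>\<epsilon>. \<epsilon> * a p) \<longlongrightarrow> 0 * a p) (at_right 0)"
      by (intro tendsto_intros)
    then show "eventually (\<lambda>\<epsilon>. \<epsilon> * a p < b p) (at_right 0)"
      using assms(2)[OF \<open>p \<in> Q\<close>] by (simp add: order_tendstoD(2))
  qed
  then have "eventually (\<lambda>\<epsilon>. \<forall>p\<in>Q. \<epsilon> * a p < b p) (at_right 0)"
    using assms(1) by (simp add: eventually_ball_finite)
  then obtain e :: real where e: "0 < e" "\<And>\<epsilon>. 0 < \<epsilon> \<Longrightarrow> \<epsilon> < e \<Longrightarrow> \<forall>p\<in>Q. \<epsilon> * a p < b p"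
    by (auto simp: eventually_at_right_field)
  then have "\<forall>p\<in>Q. e / 2 * a p < b p" using e(2)[of "e / 2"] by simp
  then show thesis using that[of "e / 2"] \<open>0 < e\<close> by simp
qed

locale assoc_weights =
  fixes g :: "'n::{finite,linorder} \<Rightarrow> 'n \<Rightarrow> real"
  assumes card_ge_2: "CARD('n) \<ge> 2"
    and crossing: "\<And>i j k l. i < j \<Longrightarrow> j < k \<Longrightarrow> k < l \<Longrightarrow> g i k + g j l < g i l + g j k"
    and superadditive: "\<And>i k l. i < k \<Longrightarrow> k < l \<Longrightarrow> g i k + g k l < g i l"
begin

lemma first_less_last: "(first_idx :: 'n) < last_idx"
  using first_idx_less_last_idx card_ge_2 by blast

lemma Eset_nca_graph:
  assumes "v \<in> Xbar g"
  shows "nca_graph (Eset g v)"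
proof -
  have feas: "\<And>i j. i < j \<Longrightarrow> g i j \<le> v $ j - v $ i"
    using assms unfolding Xbar_def by auto
  have "alternating (Eset g v)"
    unfolding alternating_def Eset_def
  proof clarsimp
    fix i j k assume "i < j" "j < k" "v $ j - v $ i = g i j" "v $ k - v $ j = g j k"
    then show False using superadditive[of i j k] feas[of i k] less_trans[of i j k] by auto
  qed
  moreover have "noncrossing (Eset g v)"
    unfolding noncrossing_def Eset_def
  proof clarsimp
    fix i j k l assume "i < j" "j < k" "k < l" "v $ k - v $ i = g i k" "v $ l - v $ j = g j l"
    then show False
      using crossing[of i j k l] feas[of i l] feas[of j k] less_trans[of i j l] less_trans[of j k l]
      by auto
  qed
  ultimately show ?thesis unfolding nca_graph_def Eset_def by auto
qed

text \<open>Extending g by zero on the diagonal turns both strict inequalities into one weak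
  four-point inequality for i \<le> j \<le> k \<le> l.\<close>

definition g0 :: "'n \<Rightarrow> 'n \<Rightarrow> real" where
  "g0 i j = (if i = j then 0 else g i j)"

lemma g0_crossing_le:
  assumes "i \<le> j" "j \<le> k" "k \<le> l"
  shows "g0 i k + g0 j l \<le> g0 i l + g0 j k"
  using crossing[of i j k l] superadditive[of i j l] assms
  by (cases "i = j"; cases "j = k"; cases "k = l") (auto simp: g0_def order_le_less)

definition tight_edges :: "('n \<Rightarrow> real) \<Rightarrow> 'n set \<Rightarrow> ('n \<times> 'n) set" where
  "tight_edges v U = {(i, j). i \<in> U \<and> j \<in> U \<and> i < j \<and> v j - v i = g i j}"

text \<open>Realizations on a subset U of the indices are built recursively: the edges of an
  nca graph D on U other than (Min U, Max U) all lie on one side of a split point k, so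
  realizations of both sides can be glued along the outer edge.\<close>

definition realizes :: "'n set \<Rightarrow> ('n \<times> 'n) set \<Rightarrow> ('n \<Rightarrow> real) \<Rightarrow> bool" where
  "realizes U D v \<longleftrightarrow> (\<forall>i\<in>U. \<forall>j\<in>U. i \<le> j \<longrightarrow> g0 i j \<le> v j - v i)
     \<and> (\<forall>(i, j)\<in>D. v j - v i = g i j) \<and> v (Max U) - v (Min U) = g0 (Min U) (Max U)
     \<and> (\<forall>x\<in>U. (Min U, x) \<in> reach (tight_edges v U))"

lemma realizesD:
  assumes "realizes U D v"
  shows realizes_feasible: "\<And>i j. i \<in> U \<Longrightarrow> j \<in> U \<Longrightarrow> i \<le> j \<Longrightarrow> g0 i j \<le> v j - v i"
    and realizes_tight: "\<And>i j. (i, j) \<in> D \<Longrightarrow> v j - v i = g i j"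
    and realizes_outer: "v (Max U) - v (Min U) = g0 (Min U) (Max U)"
    and realizes_connected: "\<And>x. x \<in> U \<Longrightarrow> (Min U, x) \<in> reach (tight_edges v U)"
  using assms unfolding realizes_def by auto

lemma g0_glue_bound:
  assumes "a \<le> i" "i \<le> k" "k \<le> j" "a \<le> m" "m \<le> j" "j \<le> b" "a \<noteq> b"
    and "vL k - vL a = g0 a k" "g0 i k \<le> vL k - vL i"
    and "vR b - vR m = g0 m b" "g0 m j \<le> vR j - vR m"
  shows "g0 i j \<le> g a b - (vR b - vR j) - (vL i - vL a)"
proof -
  have "g0 a b = g a b" using assms(7) by (simp add: g0_def)
  then show ?thesis
    using g0_crossing_le[of a i k j] g0_crossing_le[of a m j b] assms(1-6,8-11) by linarith
qed

lemma realizes_glue: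
  fixes a b k :: 'n
  assumes U: "a = Min U" "b = Max U" "a < b"
    and k: "a \<le> k" "k < b" "k \<in> U" "\<And>i j. (i, j) \<in> D \<Longrightarrow> (i, j) \<noteq> (a, b) \<Longrightarrow> j \<le> k \<or> k < i"
    and D: "D \<subseteq> {(i, j). i < j}" "D \<subseteq> U \<times> U"
    and L: "L = {x \<in> U. x \<le> k}" "realizes L (D \<inter> L \<times> L) vL"
    and R: "R = {x \<in> U. k < x}" "realizes R (D \<inter> R \<times> R) vR"
  shows "\<exists>v. realizes U D v"
proof -
  define v where "v x = (if x \<le> k then vL x - vL a else g a b - (vR b - vR x))" for x
  define m where "m = Min R"
  have "U \<noteq> {}" using k(3) by auto
  then have ab: "a \<in> U" "b \<in> U" "\<And>x. x \<in> U \<Longrightarrow> a \<le> x \<and> x \<le> b" using U by auto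
  then have LR: "k \<in> L" "b \<in> R" "Min L = a" "Max L = k" "Max R = b"
    using U(3) k(1-3) L(1) R(1) by (auto intro!: Min_eqI Max_eqI)
  then have m: "m \<in> R" "\<And>x. x \<in> R \<Longrightarrow> m \<le> x" unfolding m_def by (auto intro: Min_in)
  note vL = realizesD[OF L(2), unfolded LR(3,4)] and vR = realizesD[OF R(2), unfolded LR(5) m_def[symmetric]]
  have feasible: "g0 i j \<le> v j - v i" if "i \<in> U" "j \<in> U" "i \<le> j" for i j
  proof -
    consider "j \<le> k" | "k < i" | "i \<le> k" "k < j"
      using le_less_linear[of j k] le_less_linear[of i k] by blast
    then show ?thesis
    proof cases
      case 1
      then have "i \<le> k" using that(3) by order
      then show ?thesis using vL(1)[of i j] 1 that L(1) by (simp add: v_def)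
    next
      case 2
      then have "\<not> i \<le> k" "\<not> j \<le> k" using that(3) by (simp_all add: not_le)
      then show ?thesis using vR(1)[of i j] 2 that R(1) by (simp add: v_def)
    next
      case 3
      then have "i \<in> L" "j \<in> R" "\<not> j \<le> k" "k \<le> j" using that L(1) R(1) by auto
      moreover have "a \<le> i" "a \<le> m" "m \<le> j" "j \<le> b" "a \<noteq> b"
        using ab(3) m R(1) \<open>j \<in> R\<close> that U(3) by auto
      ultimately show ?thesis
        using g0_glue_bound[of a i k j m b vL vR] 3(1) vL(1)[of i k] vL(3) vR(1)[of m j] vR(3) LR(1) m(1)
        by (simp add: v_def)
    qed
  qed
  have tight: "v j - v i = g i j" if ij: "(i, j) \<in> D" for i j
  proof -
    have "i < j" "i \<in> U" "j \<in> U" using ij D by auto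
    consider "(i, j) = (a, b)" | "j \<le> k" | "k < i" using k(4)[of i j] ij by blast
    then show ?thesis
    proof cases
      case 1
      then show ?thesis using k(1,2) by (auto simp: v_def)
    next
      case 2
      then have "i \<le> k" using \<open>i < j\<close> by order
      then show ?thesis using vL(2)[of i j] 2 ij L(1) \<open>i \<in> U\<close> \<open>j \<in> U\<close> by (simp add: v_def)
    next
      case 3
      then have "k < j" "\<not> i \<le> k" "\<not> j \<le> k" using \<open>i < j\<close> by order+
      then show ?thesis using vR(2)[of i j] 3 ij R(1) \<open>i \<in> U\<close> \<open>j \<in> U\<close> by (simp add: v_def)
    qed
  qed
  have edges: "tight_edges vL L \<subseteq> tight_edges v U" "tight_edges vR R \<subseteq> tight_edges v U"
    "(a, b) \<in> tight_edges v U"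
    using L(1) R(1) ab U(3) k(1,2) by (auto simp: tight_edges_def v_def)
  have connected: "(a, x) \<in> reach (tight_edges v U)" if "x \<in> U" for x
  proof (cases "x \<le> k")
    case True
    then show ?thesis using vL(4)[of x] that L(1) reach_mono[OF _ edges(1)] by simp
  next
    case False
    then have "(m, x) \<in> reach (tight_edges v U)" "(b, m) \<in> reach (tight_edges v U)"
      using vR(4)[of x] vR(4)[OF LR(2)] reach_sym[of m b "tight_edges vR R"] reach_mono[OF _ edges(2)] that R(1)
      by auto
    moreover have "(a, b) \<in> reach (tight_edges v U)" using edges(3) by blast
    ultimately show ?thesis by (meson rtrancl_trans)
  qed
  have "v b - v a = g0 a b" using k(1,2) U(3) by (auto simp: v_def g0_def)
  then have "realizes U D v"
    unfolding realizes_def using feasible tight connected U(1,2) by auto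
  then show ?thesis by blast
qed

lemma realization_exists:
  assumes "U \<noteq> {}" "nca_graph D" "D \<subseteq> U \<times> U"
  shows "\<exists>v. realizes U D v"
  using assms
proof (induction "card U" arbitrary: U D rule: less_induct)
  case less
  define a b where "a = Min U" and "b = Max U"
  have ab: "a \<in> U" "b \<in> U" "\<And>x. x \<in> U \<Longrightarrow> a \<le> x \<and> x \<le> b"
    using less.prems(1) by (auto simp: a_def b_def)
  have D: "D \<subseteq> {(i, j). i < j}" using less.prems(2) by (simp add: nca_graph_def)
  show ?case
  proof (cases "a < b")
    case False
    have "x = a" if "x \<in> U" for x
    proof -
      have "a \<le> x" "x \<le> b" "b \<le> a" using ab(3)[OF that] False by auto
      then show "x = a" by order
    qed
    then have "U = {a}" using ab(1) by blast
    moreover have "D = {}" using D less.prems(3) \<open>U = {a}\<close> by auto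
    ultimately have "realizes U D (\<lambda>_. 0)" by (simp add: realizes_def g0_def)
    then show ?thesis by blast
  next
    case True
    have "D \<subseteq> {a..b} \<times> {a..b}" using less.prems(3) ab(3) by (auto simp: subset_iff)
    then obtain k where k: "a \<le> k" "k < b" "a < k \<Longrightarrow> (a, k) \<in> D"
      "\<And>i j. (i, j) \<in> D \<Longrightarrow> (i, j) \<noteq> (a, b) \<Longrightarrow> j \<le> k \<or> k < i"
      using nca_graph_split[OF less.prems(2) _ True] by blast
    have "k \<in> U"
    proof (cases "a = k")
      case True
      then show ?thesis using ab(1) by simp
    next
      case False
      then have "(a, k) \<in> D" using k(1,3) by (simp add: order_le_less)
      then show ?thesis using less.prems(3) by auto
    qed
    define L R where "L = {x \<in> U. x \<le> k}" and "R = {x \<in> U. k < x}"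
    have "a \<in> L" "b \<in> R" "b \<notin> L" "a \<notin> R"
      using ab k(1,2) by (auto simp: L_def R_def)
    then have "L \<noteq> {}" "R \<noteq> {}" "card L < card U" "card R < card U"
      using ab(1,2) by (auto simp: L_def R_def intro!: psubset_card_mono)
    have "nca_graph (D \<inter> L \<times> L)" "nca_graph (D \<inter> R \<times> R)"
      using nca_graph_subset[OF less.prems(2), of "D \<inter> L \<times> L"]
        nca_graph_subset[OF less.prems(2), of "D \<inter> R \<times> R"] by auto
    then obtain vL vR where "realizes L (D \<inter> L \<times> L) vL" "realizes R (D \<inter> R \<times> R) vR"
      using less.hyps[OF \<open>card L < card U\<close> \<open>L \<noteq> {}\<close>, of "D \<inter> L \<times> L"]
        less.hyps[OF \<open>card R < card U\<close> \<open>R \<noteq> {}\<close>, of "D \<inter> R \<times> R"] by auto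
    then show ?thesis
      using realizes_glue[OF a_def b_def True k(1,2) \<open>k \<in> U\<close> k(4) D less.prems(3) L_def _ R_def]
      by blast
  qed
qed

lemma exists_tree_point:
  assumes "nca_graph D"
  obtains u where "u \<in> Xg g" "D \<subseteq> Eset g u" "nca_tree (Eset g u)"
proof -
  obtain v where v: "realizes UNIV D v"
    using realization_exists[OF UNIV_not_empty assms] by auto
  define u where "u = (\<chi> i. v i - v first_idx)"
  have g0: "g0 i j = g i j" if "i < j" for i j using that by (simp add: g0_def)
  have E: "Eset g u = tight_edges v UNIV"
    by (auto simp: u_def Eset_def tight_edges_def)
  have "g i j \<le> v j - v i" if "i < j" for i j
    using v g0[OF that] less_imp_le[OF that] unfolding realizes_def by (metis UNIV_I)
  then have "u \<in> Xbar g" by (simp add: Xbar_def u_def)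
  moreover have "v last_idx - v first_idx = g first_idx last_idx"
    using v g0[OF first_less_last] by (simp add: realizes_def first_idx_def last_idx_def)
  ultimately have "u \<in> Xg g" by (simp add: Xg_def u_def)
  moreover have "D \<subseteq> Eset g u"
    using v assms by (auto simp: realizes_def Eset_def u_def nca_graph_def)
  moreover have "connected_graph (Eset g u)"
    unfolding connected_graph_def
  proof (intro allI)
    fix x y
    have "(first_idx, x) \<in> reach (Eset g u)" "(first_idx, y) \<in> reach (Eset g u)"
      using v E by (simp_all add: realizes_def first_idx_def)
    then show "(x, y) \<in> reach (Eset g u)"
      using reach_sym[of first_idx x] rtrancl_trans[of x first_idx] by blast
  qed
  moreover have "nca_graph (Eset g u)"
    using Eset_nca_graph[OF \<open>u \<in> Xbar g\<close>] .
  ultimately show thesis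
    using that nca_graph_forest spanning_tree_if_forest nca_tree_iff nca_graph_def by metis
qed

definition slack :: "(real, 'n) vec \<Rightarrow> 'n \<times> 'n \<Rightarrow> real" where
  "slack v p = edge_diff v p - g (fst p) (snd p)"

lemma Xbar_iff_slack: "v \<in> Xbar g \<longleftrightarrow> v $ first_idx = 0 \<and> (\<forall>p. fst p < snd p \<longrightarrow> 0 \<le> slack v p)"
  by (auto simp: Xbar_def slack_def edge_diff_def)

lemma Xbar_slack_nonneg: "v \<in> Xbar g \<Longrightarrow> fst p < snd p \<Longrightarrow> 0 \<le> slack v p"
  by (cases p) (simp add: Xbar_iff_slack)

lemma Eset_iff_slack: "p \<in> Eset g v \<longleftrightarrow> fst p < snd p \<and> slack v p = 0"
  by (cases p) (auto simp: Eset_def slack_def edge_diff_def)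

lemma slack_affine:
  assumes "a + b = 1"
  shows "slack (a *\<^sub>R x + b *\<^sub>R y) p = a * slack x p + b * slack y p"
proof -
  have b: "b = 1 - a" using assms by simp
  show ?thesis unfolding b slack_def by (simp add: algebra_simps)
qed

lemma slack_add: "slack (v + w) p = slack v p + edge_diff w p"
  by (simp add: slack_def)

lemma edge_diff_eq_slack_diff: "edge_diff (v - w) p = slack v p - slack w p"
  by (simp add: slack_def)

definition tight_face :: "('n \<times> 'n) set \<Rightarrow> ((real, 'n) vec) set" where
  "tight_face S = {v \<in> Xbar g. S \<subseteq> Eset g v}"

definition face_edges :: "((real, 'n) vec) set \<Rightarrow> ('n \<times> 'n) set" where
  "face_edges F = (\<Inter>v\<in>F. Eset g v)"

lemma Eset_open_segment:
  assumes "x \<in> Xbar g" "y \<in> Xbar g" "z \<in> open_segment x y"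
  shows "Eset g z = Eset g x \<inter> Eset g y"
proof -
  obtain \<mu> where \<mu>: "0 < \<mu>" "\<mu> < 1" "z = (1 - \<mu>) *\<^sub>R x + \<mu> *\<^sub>R y"
    using assms(3) by (auto simp: in_segment)
  have "slack z p = 0 \<longleftrightarrow> slack x p = 0 \<and> slack y p = 0" if "fst p < snd p" for p
  proof -
    have "0 \<le> (1 - \<mu>) * slack x p" "0 \<le> \<mu> * slack y p"
      using Xbar_slack_nonneg[OF assms(1) that] Xbar_slack_nonneg[OF assms(2) that] \<mu>(1,2) by simp_all
    moreover have "slack z p = (1 - \<mu>) * slack x p + \<mu> * slack y p"
      using \<mu>(3) by (simp add: slack_affine)
    ultimately show ?thesis using \<mu>(1,2) by (simp add: add_nonneg_eq_0_iff)
  qed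
  then show ?thesis by (auto simp: Eset_iff_slack)
qed

lemma convex_tight_face: "convex (tight_face S)"
  unfolding convex_alt
proof (intro ballI allI impI)
  fix x y and \<mu> :: real
  assume x: "x \<in> tight_face S" and y: "y \<in> tight_face S" and \<mu>: "0 \<le> \<mu> \<and> \<mu> \<le> 1"
  define z where "z = (1 - \<mu>) *\<^sub>R x + \<mu> *\<^sub>R y"
  have X: "x \<in> Xbar g" "y \<in> Xbar g" using x y by (auto simp: tight_face_def)
  have slack_z: "slack z p = (1 - \<mu>) * slack x p + \<mu> * slack y p" for p
    by (simp add: z_def slack_affine)
  have "z \<in> Xbar g"
    unfolding Xbar_iff_slack
  proof (intro conjI allI impI)
    show "z $ first_idx = 0" using X by (simp add: z_def Xbar_def)
    fix p :: "'n \<times> 'n" assume "fst p < snd p"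
    then show "0 \<le> slack z p"
      using Xbar_slack_nonneg[OF X(1)] Xbar_slack_nonneg[OF X(2)] \<mu> by (simp add: slack_z)
  qed
  moreover have "S \<subseteq> Eset g z"
  proof
    fix p assume "p \<in> S"
    then have "p \<in> Eset g x" "p \<in> Eset g y" using x y by (auto simp: tight_face_def)
    then show "p \<in> Eset g z" by (simp add: Eset_iff_slack slack_z)
  qed
  ultimately show "(1 - \<mu>) *\<^sub>R x + \<mu> *\<^sub>R y \<in> tight_face S"
    by (simp add: tight_face_def z_def)
qed

lemma tight_face_face_of: "tight_face S face_of Xbar g"
  unfolding face_of_def
proof (intro conjI ballI impI)
  show "tight_face S \<subseteq> Xbar g" by (auto simp: tight_face_def)
  show "convex (tight_face S)" by (rule convex_tight_face)
  fix a b x assume "a \<in> Xbar g" "b \<in> Xbar g" "x \<in> tight_face S" "x \<in> open_segment a b"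
  then show "a \<in> tight_face S" "b \<in> tight_face S"
    using Eset_open_segment by (auto simp: tight_face_def)
qed

lemma face_has_point_with_face_edges:
  assumes F: "F face_of Xbar g" "F \<noteq> {}"
  obtains w where "w \<in> F" "Eset g w = face_edges F"
proof -
  obtain w where w: "w \<in> F" and least: "\<And>x. x \<in> F \<Longrightarrow> card (Eset g w) \<le> card (Eset g x)"
    using ex_has_least_nat[of "\<lambda>w. w \<in> F" _ "\<lambda>w. card (Eset g w)"] F(2) by blast
  have FX: "F \<subseteq> Xbar g" using face_of_imp_subset[OF F(1)] .
  have "Eset g w \<subseteq> Eset g x" if "x \<in> F" for x
  proof (rule ccontr)
    assume not_sub: "\<not> Eset g w \<subseteq> Eset g x"
    then have mid: "midpoint w x \<in> open_segment w x" by auto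
    moreover have "open_segment w x \<subseteq> F"
      using face_of_imp_convex[OF F(1)] w that by (simp add: convex_contains_open_segment)
    moreover have "w \<in> Xbar g" "x \<in> Xbar g" using FX w that by auto
    ultimately have "midpoint w x \<in> F" "Eset g (midpoint w x) = Eset g w \<inter> Eset g x"
      using Eset_open_segment[of w x "midpoint w x"] by auto
    moreover have "card (Eset g w \<inter> Eset g x) < card (Eset g w)"
      using not_sub by (intro psubset_card_mono) auto
    ultimately show False using least[of "midpoint w x"] by simp
  qed
  then have "Eset g w = face_edges F" using w by (auto simp: face_edges_def)
  then show thesis using that w by blast
qed

lemma exists_point_beyond:
  assumes w: "w \<in> Xbar g" and x: "x \<in> Xbar g" and sub: "Eset g w \<subseteq> Eset g x"
  obtains \<epsilon> where "0 < \<epsilon>" "w + \<epsilon> *\<^sub>R (w - x) \<in> Xbar g"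
proof -
  define Q where "Q = {p :: 'n \<times> 'n. fst p < snd p \<and> p \<notin> Eset g w}"
  have "0 < slack w p" if "p \<in> Q" for p
    using that Xbar_slack_nonneg[OF w, of p] by (auto simp: Q_def Eset_iff_slack less_le)
  then obtain \<epsilon> where \<epsilon>: "0 < \<epsilon>" "\<And>p. p \<in> Q \<Longrightarrow> \<epsilon> * (slack x p - slack w p) < slack w p"
    using exists_pos_mult_less[of Q "\<lambda>p. slack w p" "\<lambda>p. slack x p - slack w p"] by auto
  define y where "y = w + \<epsilon> *\<^sub>R (w - x)"
  have slack_y: "slack y p = slack w p - \<epsilon> * (slack x p - slack w p)" for p
    unfolding y_def slack_add edge_diff_scaleR edge_diff_eq_slack_diff by (simp add: algebra_simps)
  have "0 \<le> slack y p" if "fst p < snd p" for p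
  proof (cases "p \<in> Eset g w")
    case True
    then show ?thesis using sub by (auto simp: slack_y Eset_iff_slack)
  next
    case False
    then show ?thesis using that \<epsilon>(2)[of p] by (simp add: Q_def slack_y)
  qed
  moreover have "y $ first_idx = 0" using w x by (simp add: y_def Xbar_def)
  ultimately have "y \<in> Xbar g" by (simp add: Xbar_iff_slack)
  then show thesis using that \<epsilon>(1) by (simp add: y_def)
qed

text \<open>Every nonempty face F is cut out by its common tight edges: a point x tight on them can
  be reached from a point w of F whose tight edges are exactly those, and moving a little beyond
  w away from x stays in Xbar, so w lies inside a segment from x.\<close>

lemma face_eq_tight_face:
  assumes F: "F face_of Xbar g" "F \<noteq> {}"
  shows "F = tight_face (face_edges F)"
proof
  have FX: "F \<subseteq> Xbar g" using face_of_imp_subset[OF F(1)] .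
  then show "F \<subseteq> tight_face (face_edges F)" by (auto simp: tight_face_def face_edges_def)
  show "tight_face (face_edges F) \<subseteq> F"
  proof
    fix x assume "x \<in> tight_face (face_edges F)"
    then have x: "x \<in> Xbar g" "face_edges F \<subseteq> Eset g x" by (auto simp: tight_face_def)
    obtain w where w: "w \<in> F" "Eset g w = face_edges F"
      using face_has_point_with_face_edges[OF F] .
    show "x \<in> F"
    proof (cases "x = w")
      case False
      obtain \<epsilon> where \<epsilon>: "0 < \<epsilon>" "w + \<epsilon> *\<^sub>R (w - x) \<in> Xbar g"
        using exists_point_beyond[of w x] w FX x by auto
      define y where "y = w + \<epsilon> *\<^sub>R (w - x)"
      define u where "u = 1 / (1 + \<epsilon>)"
      have "u + u * \<epsilon> = 1" "0 < u" "u < 1" using \<epsilon>(1) by (simp_all add: u_def field_simps)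
      have "(1 - u) *\<^sub>R x + u *\<^sub>R y = (1 - (u + u * \<epsilon>)) *\<^sub>R x + (u + u * \<epsilon>) *\<^sub>R w"
        by (simp add: y_def algebra_simps)
      then have w_eq: "w = (1 - u) *\<^sub>R x + u *\<^sub>R y" using \<open>u + u * \<epsilon> = 1\<close> by simp
      have "x \<noteq> y"
      proof
        assume "x = y"
        then have "w = x" using w_eq by (simp add: algebra_simps)
        then show False using False by simp
      qed
      then have "w \<in> open_segment x y"
        using w_eq \<open>0 < u\<close> \<open>u < 1\<close> by (auto simp: in_segment)
      then show "x \<in> F"
        using F(1) x(1) \<epsilon>(2) w(1) unfolding face_of_def y_def[symmetric] by blast
    qed (use w in simp)
  qed
qed

lemma face_edges_nca_graph:
  assumes "F face_of Xbar g" "F \<noteq> {}"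
  shows "nca_graph (face_edges F)"
proof -
  obtain w where "w \<in> F" "Eset g w = face_edges F"
    using face_has_point_with_face_edges[OF assms] .
  moreover have "w \<in> Xbar g" using \<open>w \<in> F\<close> face_of_imp_subset[OF assms(1)] by auto
  ultimately show ?thesis using Eset_nca_graph[of w] by simp
qed

lemma Xbar_eq_if_connected_tight:
  assumes "x \<in> Xbar g" "y \<in> Xbar g" "connected_graph T" "T \<subseteq> Eset g x" "T \<subseteq> Eset g y"
  shows "x = y"
proof -
  have "\<forall>p\<in>T. edge_diff (x - y) p = 0"
  proof
    fix p assume "p \<in> T"
    then have "slack x p = 0" "slack y p = 0" using assms(4,5) by (auto simp: Eset_iff_slack)
    then show "edge_diff (x - y) p = 0" by (simp add: edge_diff_eq_slack_diff del: edge_diff_diff)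
  qed
  moreover have "(x - y) $ first_idx = 0" using assms(1,2) by (simp add: Xbar_def)
  ultimately have "x - y = 0" by (rule edge_diff_eq_0_imp_eq_0[OF assms(3)])
  then show ?thesis by simp
qed

lemma tree_point_perturb:
  assumes u: "u \<in> Xbar g" and tree: "nca_tree (Eset g u)"
  obtains t where "0 < t" "\<And>e. e \<in> Eset g u \<Longrightarrow> u + t *\<^sub>R cut_vector (Eset g u) e \<in> Xbar g"
    "\<And>e. e \<in> Eset g u \<Longrightarrow> Eset g (u + t *\<^sub>R cut_vector (Eset g u) e) = Eset g u - {e}"
proof -
  define T where "T = Eset g u"
  have forest: "forest T" using nca_tree_forest[OF tree] by (simp add: T_def)
  define Q where "Q = {p :: 'n \<times> 'n. fst p < snd p \<and> p \<notin> T}"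
  have "0 < slack u p" if "p \<in> Q" for p
    using that Xbar_slack_nonneg[OF u, of p] by (auto simp: Q_def T_def Eset_iff_slack less_le)
  then obtain t where t: "0 < t" "\<And>p. p \<in> Q \<Longrightarrow> t * 1 < slack u p"
    using exists_pos_mult_less[of Q "\<lambda>p. slack u p" "\<lambda>_. 1"] by auto
  have slack_w: "0 \<le> slack (u + t *\<^sub>R cut_vector T e) p \<and>
      (slack (u + t *\<^sub>R cut_vector T e) p = 0 \<longleftrightarrow> p \<in> T - {e})"
    if "e \<in> T" "fst p < snd p" for e p
  proof -
    have w: "slack (u + t *\<^sub>R cut_vector T e) p = slack u p + t * edge_diff (cut_vector T e) p"
      by (simp add: slack_add)
    consider "p \<in> T" | "p \<notin> T" by blast
    then show ?thesis
    proof cases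
      case 1
      then have "slack u p = 0" by (simp add: T_def Eset_iff_slack)
      then show ?thesis using t(1) edge_diff_cut_vector[OF forest that(1) 1] 1 by (auto simp: w)
    next
      case 2
      have "- t \<le> t * edge_diff (cut_vector T e) p"
        using abs_edge_diff_cut_vector_le[of T e p] t(1)
          mult_left_mono[of "- 1" "edge_diff (cut_vector T e) p" t] by (simp add: abs_le_iff)
      then show ?thesis using t(2)[of p] 2 that(2) by (simp add: w Q_def)
    qed
  qed
  have T_lt: "fst p < snd p" if "p \<in> T" for p using that by (simp add: T_def Eset_iff_slack)
  have "u $ first_idx = 0" using u by (simp add: Xbar_def)
  then have "u + t *\<^sub>R cut_vector T e \<in> Xbar g" if "e \<in> T" for e
    using slack_w[OF that] by (simp add: Xbar_iff_slack)
  moreover have "Eset g (u + t *\<^sub>R cut_vector T e) = T - {e}" if "e \<in> T" for e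
    using slack_w[OF that] T_lt by (auto simp: Eset_iff_slack)
  ultimately show thesis using that t(1) by (simp add: T_def)
qed

lemma span_tight_face:
  assumes u: "u \<in> Xbar g" and tree: "nca_tree (Eset g u)" and S: "S \<subseteq> Eset g u"
  shows "span ((\<lambda>v. v - u) ` tight_face S) = span (cut_vector (Eset g u) ` (Eset g u - S))"
proof -
  define T where "T = Eset g u"
  have forest: "forest T" and conn: "connected_graph T"
    using nca_tree_forest[OF tree] nca_tree_connected[OF tree] by (simp_all add: T_def)
  have "v - u \<in> span (cut_vector T ` (T - S))" if "v \<in> tight_face S" for v
  proof -
    have "(v - u) $ first_idx = 0" using that u by (simp add: tight_face_def Xbar_def)
    then have "v - u = (\<Sum>e\<in>T. edge_diff (v - u) e *\<^sub>R cut_vector T e)"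
      by (rule vec_eq_sum_cut_vectors[OF conn forest])
    also have "\<dots> = (\<Sum>e\<in>T - S. edge_diff (v - u) e *\<^sub>R cut_vector T e)"
    proof (intro sum.mono_neutral_right ballI)
      fix e assume "e \<in> T - (T - S)"
      then have "slack v e = 0" "slack u e = 0"
        using that S by (auto simp: tight_face_def Eset_iff_slack)
      then show "edge_diff (v - u) e *\<^sub>R cut_vector T e = 0"
        by (simp add: edge_diff_eq_slack_diff del: edge_diff_diff)
    qed auto
    also have "\<dots> \<in> span (cut_vector T ` (T - S))"
      by (intro span_sum span_scale span_base) auto
    finally show ?thesis .
  qed
  moreover obtain t where t: "0 < t" "\<And>e. e \<in> T \<Longrightarrow> u + t *\<^sub>R cut_vector T e \<in> Xbar g"
    "\<And>e. e \<in> T \<Longrightarrow> Eset g (u + t *\<^sub>R cut_vector T e) = T - {e}"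
    using tree_point_perturb[OF u tree] unfolding T_def by blast
  have "cut_vector T e \<in> span ((\<lambda>v. v - u) ` tight_face S)" if "e \<in> T - S" for e
  proof -
    have "u + t *\<^sub>R cut_vector T e \<in> tight_face S"
      using t(2,3)[of e] that S by (auto simp: tight_face_def T_def)
    then have "t *\<^sub>R cut_vector T e \<in> (\<lambda>v. v - u) ` tight_face S"
      using image_eqI[of "t *\<^sub>R cut_vector T e" "\<lambda>v. v - u" "u + t *\<^sub>R cut_vector T e"] by simp
    then have "(1 / t) *\<^sub>R (t *\<^sub>R cut_vector T e) \<in> span ((\<lambda>v. v - u) ` tight_face S)"
      by (intro span_scale span_base)
    then show ?thesis using t(1) by simp
  qed
  ultimately show ?thesis unfolding T_def[symmetric]
    by (intro subset_antisym span_minimal subspace_span) auto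
qed

lemma aff_dim_tight_face:
  assumes u: "u \<in> Xbar g" and tree: "nca_tree (Eset g u)" and S: "S \<subseteq> Eset g u"
  shows "aff_dim (tight_face S) = int (card (Eset g u - S))"
proof -
  define T where "T = Eset g u"
  have forest: "forest T" using nca_tree_forest[OF tree] by (simp add: T_def)
  have "u \<in> affine hull tight_face S"
    using u S by (intro hull_inc) (simp add: tight_face_def)
  then have "aff_dim (tight_face S) = int (dim ((\<lambda>v. v - u) ` tight_face S))"
    by (rule aff_dim_eq_dim_subtract)
  also have "dim ((\<lambda>v. v - u) ` tight_face S) = dim (cut_vector T ` (T - S))"
    using span_tight_face[OF assms] by (intro span_eq_dim) (simp add: T_def)
  also have "\<dots> = card (T - S)"
    using independent_cut_vectors[OF forest, of "T - S"] inj_on_subset[OF inj_on_cut_vector[OF forest]]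
    by (simp add: dim_eq_card_independent card_image)
  finally show ?thesis by (simp add: T_def)
qed

lemma face_edges_tight_face:
  assumes u: "u \<in> Xbar g" and tree: "nca_tree (Eset g u)" and S: "S \<subseteq> Eset g u"
  shows "face_edges (tight_face S) = S"
proof
  show "S \<subseteq> face_edges (tight_face S)" by (auto simp: face_edges_def tight_face_def)
  show "face_edges (tight_face S) \<subseteq> S"
  proof
    fix p assume p: "p \<in> face_edges (tight_face S)"
    have "u \<in> tight_face S" using u S by (simp add: tight_face_def)
    then have "p \<in> Eset g u" using p unfolding face_edges_def by blast
    show "p \<in> S"
    proof (rule ccontr)
      assume "p \<notin> S"
      obtain t where t: "u + t *\<^sub>R cut_vector (Eset g u) p \<in> Xbar g"
        "Eset g (u + t *\<^sub>R cut_vector (Eset g u) p) = Eset g u - {p}"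
        using tree_point_perturb[OF u tree] \<open>p \<in> Eset g u\<close> by metis
      then have "u + t *\<^sub>R cut_vector (Eset g u) p \<in> tight_face S"
        using S \<open>p \<notin> S\<close> by (auto simp: tight_face_def)
      then have "p \<in> Eset g (u + t *\<^sub>R cut_vector (Eset g u) p)"
        using p unfolding face_edges_def by blast
      then show False using t(2) by simp
    qed
  qed
qed

lemma tight_face_Eset_tree_point:
  assumes "u \<in> Xbar g" "nca_tree (Eset g u)"
  shows "tight_face (Eset g u) = {u}"
  using assms Xbar_eq_if_connected_tight[OF _ assms(1) nca_tree_connected[OF assms(2)]]
  by (auto simp: tight_face_def)

lemma Xg_eq_tight_face: "Xg g = tight_face {outer_edge}"
  using first_less_last by (auto simp: Xg_def tight_face_def Eset_def)

lemma Xg_subset_Xbar: "Xg g \<subseteq> Xbar g"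
  by (simp add: Xg_def)

lemma Xg_face_of_Xbar: "Xg g face_of Xbar g"
  unfolding Xg_eq_tight_face by (rule tight_face_face_of)

lemma face_of_Xg_iff: "F face_of Xg g \<longleftrightarrow> F face_of Xbar g \<and> F \<subseteq> Xg g"
proof
  assume "F face_of Xg g"
  then show "F face_of Xbar g \<and> F \<subseteq> Xg g"
    using face_of_trans[OF _ Xg_face_of_Xbar] face_of_imp_subset by blast
next
  assume "F face_of Xbar g \<and> F \<subseteq> Xg g"
  then show "F face_of Xg g"
    using face_of_subset[of F "Xbar g" "Xg g"] face_of_imp_subset[OF Xg_face_of_Xbar] by blast
qed

lemma nca_tree_realized:
  fixes T :: "('n \<times> 'n) set"
  assumes "nca_tree T"
  obtains u where "u \<in> Xg g" "Eset g u = T"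
proof -
  obtain u where u: "u \<in> Xg g" "T \<subseteq> Eset g u" "nca_tree (Eset g u)"
    using exists_tree_point[of T] assms by (auto simp: nca_tree_iff)
  then have "T = Eset g u"
    using spanning_tree_subset_eq assms by (auto simp: nca_tree_iff)
  then show thesis using that u(1) by blast
qed

lemma first_last_in_nca_tree:
  fixes T :: "('n \<times> 'n) set"
  assumes "nca_tree T"
  shows "outer_edge \<in> T"
proof -
  obtain u where "u \<in> Xg g" "Eset g u = T" using nca_tree_realized[OF assms] .
  then show ?thesis by (auto simp: Xg_eq_tight_face tight_face_def)
qed

lemma extreme_point_of_Xbar_iff: "v extreme_point_of Xbar g \<longleftrightarrow> v \<in> Xbar g \<and> nca_tree (Eset g v)"
proof
  assume "v extreme_point_of Xbar g"
  then have v: "{v} face_of Xbar g" "v \<in> Xbar g"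
    by (auto simp: face_of_singleton extreme_point_of_def)
  then have single: "tight_face (Eset g v) = {v}"
    using face_eq_tight_face[of "{v}"] by (simp add: face_edges_def)
  obtain u where u: "u \<in> Xg g" "Eset g v \<subseteq> Eset g u" "nca_tree (Eset g u)"
    using exists_tree_point[OF Eset_nca_graph[OF v(2)]] .
  then have "u \<in> tight_face (Eset g v)" by (simp add: tight_face_def Xg_def)
  then show "v \<in> Xbar g \<and> nca_tree (Eset g v)" using single u(3) v(2) by simp
next
  assume "v \<in> Xbar g \<and> nca_tree (Eset g v)"
  then have "tight_face (Eset g v) = {v}" using tight_face_Eset_tree_point by blast
  then have "{v} face_of Xbar g" using tight_face_face_of[of "Eset g v"] by simp
  then show "v extreme_point_of Xbar g" by (simp add: face_of_singleton)
qed

lemma extreme_point_of_Xg_iff: "v extreme_point_of Xg g \<longleftrightarrow> v extreme_point_of Xbar g"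
proof -
  have "v \<in> Xg g" if "v extreme_point_of Xbar g"
    using that first_last_in_nca_tree unfolding extreme_point_of_Xbar_iff Xg_eq_tight_face
    by (auto simp: tight_face_def)
  then show ?thesis using extreme_point_of_face[OF Xg_face_of_Xbar] by blast
qed

lemma vertex_of_Xg_iff: "v extreme_point_of Xg g \<longleftrightarrow> v \<in> Xg g \<and> nca_tree (Eset g v)"
proof -
  have "v \<in> Xg g" if "nca_tree (Eset g v)" "v \<in> Xbar g"
    using that first_last_in_nca_tree by (simp add: Xg_eq_tight_face tight_face_def)
  then show ?thesis
    unfolding extreme_point_of_Xg_iff extreme_point_of_Xbar_iff by (auto simp: Xg_def)
qed

lemma face_contains_tree_point:
  assumes "F face_of Xbar g" "F \<noteq> {}"
  obtains u where "u \<in> F" "u \<in> Xg g" "face_edges F \<subseteq> Eset g u" "nca_tree (Eset g u)"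
proof -
  obtain u where u: "u \<in> Xg g" "face_edges F \<subseteq> Eset g u" "nca_tree (Eset g u)"
    using exists_tree_point[OF face_edges_nca_graph[OF assms]] .
  then have "u \<in> F"
    using face_eq_tight_face[OF assms] by (auto simp: tight_face_def Xg_def)
  then show thesis using that u by blast
qed

lemma tight_face_antimono: "S \<subseteq> S' \<Longrightarrow> tight_face S' \<subseteq> tight_face S"
  by (auto simp: tight_face_def)

lemma outer_edge_in_face_edges: "F \<subseteq> Xg g \<Longrightarrow> outer_edge \<in> face_edges F"
  by (auto simp: face_edges_def Xg_eq_tight_face tight_face_def)

lemma polyhedron_Xbar: "polyhedron (Xbar g)"
proof -
  have "Xbar g = {x. axis first_idx 1 \<bullet> x = 0} \<inter>
     \<Inter> ((\<lambda>p. {x. g (fst p) (snd p) \<le> (axis (snd p) 1 - axis (fst p) 1) \<bullet> x}) ` {p. fst p < snd p})"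
    by (auto simp: Xbar_def inner_diff_left inner_axis')
  also have "polyhedron \<dots>"
    by (intro polyhedron_Int polyhedron_hyperplane polyhedron_Inter) (auto intro: polyhedron_halfspace_ge)
  finally show ?thesis .
qed

lemma bounded_Xg: "bounded (Xg g)"
proof -
  define M where "M k = \<bar>g first_idx k\<bar> + \<bar>g first_idx last_idx\<bar> + \<bar>g k last_idx\<bar>" for k
  have "\<bar>v $ k\<bar> \<le> M k" if "v \<in> Xg g" for v k
  proof -
    have v: "v $ first_idx = 0" "v $ last_idx = g first_idx last_idx"
      and feasible: "\<And>i j. i < j \<Longrightarrow> g i j \<le> v $ j - v $ i"
      using that by (auto simp: Xg_def Xbar_def)
    consider "k = first_idx" | "k = last_idx" | "first_idx < k" "k < last_idx"
      using first_idx_le[of k] le_last_idx[of k] by (auto simp: order_le_less)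
    then show ?thesis
    proof cases
      case 3
      then show ?thesis
        using feasible[of first_idx k] feasible[of k last_idx] v unfolding M_def by arith
    qed (use v in \<open>auto simp: M_def\<close>)
  qed
  then have "norm v \<le> (\<Sum>k\<in>UNIV. M k)" if "v \<in> Xg g" for v
    using norm_le_l1_cart[of v] sum_mono[of UNIV "\<lambda>k. \<bar>v $ k\<bar>" M] that by fastforce
  then show ?thesis by (auto simp: bounded_iff)
qed

lemma polytope_Xg: "polytope (Xg g)"
proof -
  have "Xg g = Xbar g \<inter> {x. (axis last_idx 1 - axis first_idx 1) \<bullet> x = g first_idx last_idx}"
    by (auto simp: Xg_def inner_diff_left inner_axis')
  then have "polyhedron (Xg g)" using polyhedron_Xbar polyhedron_Int polyhedron_hyperplane by metis
  then show ?thesis using bounded_Xg by (simp add: polytope_eq_bounded_polyhedron)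
qed

text \<open>Adding the same amount to all coordinates but the first keeps every constraint of Xbar.\<close>

lemma unbounded_Xbar: "\<not> bounded (Xbar g)"
proof
  assume "bounded (Xbar g)"
  then obtain B where B: "\<And>x. x \<in> Xbar g \<Longrightarrow> norm x \<le> B" by (auto simp: bounded_iff)
  obtain u where "u \<in> Xg g" using exists_tree_point[of "{}"] by (auto simp: nca_graph_def
        alternating_def noncrossing_def)
  then have u: "u $ first_idx = 0" "\<And>i j. i < j \<Longrightarrow> g i j \<le> u $ j - u $ i"
    by (auto simp: Xg_def Xbar_def)
  define t where "t = \<bar>B\<bar> + \<bar>u $ last_idx\<bar> + 1"
  define x where "x = u + t *\<^sub>R (\<chi> k. if k = first_idx then 0 else 1)"
  have "u $ j - u $ i \<le> x $ j - x $ i" if "i < j" for i j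
    using that first_idx_le[of i] by (cases "i = first_idx") (auto simp: x_def t_def)
  then have "x \<in> Xbar g"
    using u order_trans by (fastforce simp: Xbar_def x_def)
  then have "\<bar>x $ last_idx\<bar> \<le> B" using B component_le_norm_cart[of x last_idx] by fastforce
  moreover have "x $ last_idx = u $ last_idx + t" using first_less_last by (simp add: x_def)
  ultimately show False by (simp add: t_def)
qed

lemma aff_dim_Xg_eq_card:
  assumes "u \<in> Xg g" "nca_tree (Eset g u)"
  shows "aff_dim (Xg g) = int (card (Eset g u - {outer_edge}))"
  using aff_dim_tight_face[of u "{outer_edge}"] assms Xg_eq_tight_face
  by (simp add: tight_face_def)

lemma aff_dim_Xg: "aff_dim (Xg g) = int CARD('n) - 2"
proof -
  obtain u where u: "u \<in> Xg g" "nca_tree (Eset g u)"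
    using exists_tree_point[of "{}"] by (auto simp: nca_graph_def alternating_def noncrossing_def)
  have "outer_edge \<in> Eset g u" using u(1) by (simp add: Xg_eq_tight_face tight_face_def)
  then have "card (Eset g u - {outer_edge}) = CARD('n) - 2"
    using card_nca_tree[OF u(2)] by simp
  then show ?thesis using aff_dim_Xg_eq_card[OF u] card_ge_2 by simp
qed

lemma faces_of_Xg_through_vertex:
  assumes "v extreme_point_of Xg g"
  shows "{F. F facet_of Xg g \<and> v \<in> F} = (\<lambda>e. tight_face {outer_edge, e}) ` (Eset g v - {outer_edge})"
proof -
  define T where "T = Eset g v"
  have v: "v \<in> Xg g" "v \<in> Xbar g" "nca_tree T"
    using assms Xg_subset_Xbar by (auto simp: T_def vertex_of_Xg_iff)
  then have "outer_edge \<in> T" by (simp add: T_def Xg_eq_tight_face tight_face_def)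
  have dim_Xg: "aff_dim (Xg g) = int (card (T - {outer_edge}))"
    using aff_dim_Xg_eq_card v by (simp add: T_def)
  have dim: "aff_dim (tight_face S) = int (card (T - S))" if "S \<subseteq> T" for S
    using aff_dim_tight_face[OF v(2)] v(3) that by (simp add: T_def)
  have face: "tight_face S face_of Xg g" "v \<in> tight_face S" if "outer_edge \<in> S" "S \<subseteq> T" for S
  proof -
    have "tight_face S \<subseteq> Xg g" unfolding Xg_eq_tight_face using that by (intro tight_face_antimono) auto
    then show "tight_face S face_of Xg g" using tight_face_face_of face_of_Xg_iff by blast
    show "v \<in> tight_face S" using v(2) that by (simp add: tight_face_def T_def)
  qed
  have card_T: "card (T - {outer_edge}) = card (T - S) + card (S - {outer_edge})"
    if "outer_edge \<in> S" "S \<subseteq> T" for S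
  proof -
    have "T - {outer_edge} = (T - S) \<union> (S - {outer_edge})" "(T - S) \<inter> (S - {outer_edge}) = {}"
      using that by auto
    then show ?thesis by (simp add: card_Un_disjoint)
  qed
  show ?thesis
    unfolding T_def[symmetric]
  proof (intro subset_antisym subsetI)
    fix F assume "F \<in> {F. F facet_of Xg g \<and> v \<in> F}"
    then have F: "F face_of Xbar g" "F \<subseteq> Xg g" "F \<noteq> {}" "aff_dim F = aff_dim (Xg g) - 1" "v \<in> F"
      by (auto simp: facet_of_def face_of_Xg_iff)
    define S where "S = face_edges F"
    have "F = tight_face S" "S \<subseteq> T" "outer_edge \<in> S"
      using face_eq_tight_face[OF F(1,3)] F(2,5) outer_edge_in_face_edges
      by (auto simp: S_def T_def face_edges_def)
    then have "card (S - {outer_edge}) = 1"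
      using F(4) dim dim_Xg card_T[of S] by simp
    then obtain e where "S - {outer_edge} = {e}" by (auto simp: card_1_singleton_iff)
    then have "S = {outer_edge, e}" "e \<in> T - {outer_edge}"
      using \<open>S \<subseteq> T\<close> \<open>outer_edge \<in> S\<close> by auto
    then show "F \<in> (\<lambda>e. tight_face {outer_edge, e}) ` (T - {outer_edge})"
      using \<open>F = tight_face S\<close> by blast
  next
    fix F assume "F \<in> (\<lambda>e. tight_face {outer_edge, e}) ` (T - {outer_edge})"
    then obtain e where e: "e \<in> T" "e \<noteq> outer_edge" "F = tight_face {outer_edge, e}" by auto
    have "aff_dim F = aff_dim (Xg g) - 1"
      using dim[of "{outer_edge, e}"] card_T[of "{outer_edge, e}"] e \<open>outer_edge \<in> T\<close> dim_Xg by simp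
    then show "F \<in> {F. F facet_of Xg g \<and> v \<in> F}"
      using face[of "{outer_edge, e}"] e \<open>outer_edge \<in> T\<close> by (auto simp: facet_of_def)
  qed
qed

lemma simple_polytope_Xg: "simple_polytope (Xg g)"
  unfolding simple_polytope_def
proof (intro conjI allI impI polytope_Xg)
  fix v assume v: "v extreme_point_of Xg g"
  define T where "T = Eset g v"
  have "v \<in> Xg g" "nca_tree T" using v by (simp_all add: T_def vertex_of_Xg_iff)
  then have "v \<in> Xbar g" "outer_edge \<in> T"
    using Xg_subset_Xbar by (auto simp: T_def Xg_eq_tight_face tight_face_def)
  have edges_eq: "face_edges (tight_face {outer_edge, e}) = {outer_edge, e}" if "e \<in> T" for e
    using face_edges_tight_face[OF \<open>v \<in> Xbar g\<close>, of "{outer_edge, e}"] \<open>nca_tree T\<close>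
      \<open>outer_edge \<in> T\<close> that
    unfolding T_def by blast
  have inj: "inj_on (\<lambda>e. tight_face {outer_edge, e}) (T - {outer_edge})"
  proof (rule inj_onI)
    fix e e' assume e: "e \<in> T - {outer_edge}" "e' \<in> T - {outer_edge}"
      and eq: "tight_face {outer_edge, e} = tight_face {outer_edge, e'}"
    have "{outer_edge, e} = face_edges (tight_face {outer_edge, e})"
      using e(1) by (intro edges_eq[symmetric]) simp
    also have "\<dots> = {outer_edge, e'}"
      unfolding eq using e(2) by (intro edges_eq) simp
    finally have "e \<in> {outer_edge, e'}" by blast
    then show "e = e'" using e(1) by blast
  qed
  have "card {F. F facet_of Xg g \<and> v \<in> F} = card (T - {outer_edge})"
    unfolding faces_of_Xg_through_vertex[OF v] T_def[symmetric] by (rule card_image[OF inj])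
  also have "\<dots> = nat (aff_dim (Xg g))"
    using aff_dim_Xg_eq_card[OF \<open>v \<in> Xg g\<close>] \<open>nca_tree T\<close> by (simp add: T_def)
  finally show "card {F. F facet_of Xg g \<and> v \<in> F} = nat (aff_dim (Xg g))" .
qed

lemma bij_betw_Eset_vertices: "bij_betw (Eset g) {v. v extreme_point_of Xg g} {T. nca_tree T}"
proof (rule bij_betw_imageI)
  show "inj_on (Eset g) {v. v extreme_point_of Xg g}"
  proof (rule inj_onI)
    fix x y assume "x \<in> {v. v extreme_point_of Xg g}" "y \<in> {v. v extreme_point_of Xg g}"
      and E: "Eset g x = Eset g y"
    then have "x \<in> Xbar g" "y \<in> Xbar g" "connected_graph (Eset g x)"
      using nca_tree_connected Xg_subset_Xbar by (auto simp: vertex_of_Xg_iff)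
    then show "x = y" using Xbar_eq_if_connected_tight[of x y "Eset g x"] E by simp
  qed
  show "Eset g ` {v. v extreme_point_of Xg g} = {T. nca_tree T}"
  proof (intro subset_antisym subsetI)
    fix T :: "('n \<times> 'n) set" assume "T \<in> {T. nca_tree T}"
    then obtain u where "u \<in> Xg g" "Eset g u = T" using nca_tree_realized by blast
    then have "u extreme_point_of Xg g" using \<open>T \<in> {T. nca_tree T}\<close> by (simp add: vertex_of_Xg_iff)
    then show "T \<in> Eset g ` {v. v extreme_point_of Xg g}" using \<open>Eset g u = T\<close> by blast
  qed (auto simp: vertex_of_Xg_iff)
qed

lemma adjacent_vertices_Xg_iff:
  assumes u: "u extreme_point_of Xg g" and w: "w extreme_point_of Xg g"
  shows "adjacent_vertices (Xg g) u w \<longleftrightarrow>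
    card (Eset g u - Eset g w) = 1 \<and> card (Eset g w - Eset g u) = 1"
proof -
  have u': "u \<in> Xg g" "u \<in> Xbar g" "nca_tree (Eset g u)"
    and w': "w \<in> Xg g" "w \<in> Xbar g" "nca_tree (Eset g w)"
    using u w Xg_subset_Xbar by (auto simp: vertex_of_Xg_iff)
  have card_eq: "card (Eset g u) = card (Eset g w)"
    using card_nca_tree[OF u'(3)] card_nca_tree[OF w'(3)] by simp
  have eq_iff: "u = w \<longleftrightarrow> Eset g u = Eset g w"
    using bij_betw_Eset_vertices u w by (auto simp: bij_betw_def inj_on_def)
  show ?thesis
  proof
    assume "adjacent_vertices (Xg g) u w"
    then obtain F where F: "u \<noteq> w" "F face_of Xg g" "aff_dim F = 1" "u \<in> F" "w \<in> F"
      by (auto simp: adjacent_vertices_def)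
    then have "F face_of Xbar g" "F \<noteq> {}" by (auto simp: face_of_Xg_iff)
    define S where "S = face_edges F"
    have S: "F = tight_face S" "S \<subseteq> Eset g u" "S \<subseteq> Eset g w"
      using face_eq_tight_face[OF \<open>F face_of Xbar g\<close> \<open>F \<noteq> {}\<close>] F(4,5)
      by (auto simp: S_def face_edges_def)
    then have "card (Eset g u - S) = 1" "card (Eset g w - S) = 1"
      using aff_dim_tight_face[OF u'(2,3) S(2)] aff_dim_tight_face[OF w'(2,3) S(3)] F(3) by simp_all
    then show "card (Eset g u - Eset g w) = 1 \<and> card (Eset g w - Eset g u) = 1"
      using card_Diff_eq_1_if_card_eq[of "Eset g u" "Eset g w" S]
        card_Diff_eq_1_if_card_eq[of "Eset g w" "Eset g u" S] card_eq eq_iff F(1) S(2,3) by auto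
  next
    assume card: "card (Eset g u - Eset g w) = 1 \<and> card (Eset g w - Eset g u) = 1"
    define S where "S = Eset g u \<inter> Eset g w"
    have "outer_edge \<in> S" using u'(1) w'(1) by (simp add: S_def Xg_eq_tight_face tight_face_def)
    then have "tight_face S \<subseteq> Xg g"
      unfolding Xg_eq_tight_face by (intro tight_face_antimono) auto
    then have "tight_face S face_of Xg g" using tight_face_face_of face_of_Xg_iff by blast
    moreover have "u \<in> tight_face S" "w \<in> tight_face S"
      using u'(2) w'(2) by (auto simp: S_def tight_face_def)
    moreover have "aff_dim (tight_face S) = 1"
      using aff_dim_tight_face[OF u'(2,3), of S] card by (simp add: S_def Diff_Int)
    moreover have "u \<noteq> w" using card eq_iff by auto
    ultimately show "adjacent_vertices (Xg g) u w" by (auto simp: adjacent_vertices_def)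
  qed
qed

lemma convex_Xbar: "convex (Xbar g)"
  using convex_tight_face[of "{}"] by (simp add: tight_face_def)

text \<open>A bounded face of Xbar is the convex hull of its vertices, which all lie in Xg; the
  face would then be contained in Xg and have the outer edge among its tight edges.\<close>

lemma unbounded_tight_face_tree_minus_outer_edge:
  fixes T :: "('n \<times> 'n) set"
  assumes "nca_tree T"
  shows "\<not> bounded (tight_face (T - {outer_edge}))"
proof
  define R where "R = tight_face (T - {outer_edge})"
  assume "bounded (tight_face (T - {outer_edge}))"
  obtain u where u: "u \<in> Xg g" "Eset g u = T" using nca_tree_realized[OF assms] .
  have "R face_of Xbar g" by (simp add: R_def tight_face_face_of)
  then have "compact R" "convex R"
    using face_of_imp_closed[OF convex_Xbar polyhedron_imp_closed[OF polyhedron_Xbar]]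
      \<open>bounded (tight_face (T - {outer_edge}))\<close> face_of_imp_convex
    by (auto simp: R_def compact_eq_bounded_closed)
  then have "R = convex hull {x. x extreme_point_of R}" by (rule Krein_Milman_Minkowski)
  also have "\<dots> \<subseteq> convex hull (Xg g)"
  proof (rule hull_mono, rule subsetI)
    fix x assume "x \<in> {x. x extreme_point_of R}"
    then have "x extreme_point_of Xg g"
      using extreme_point_of_face[OF \<open>R face_of Xbar g\<close>] by (simp add: extreme_point_of_Xg_iff)
    then show "x \<in> Xg g" by (simp add: extreme_point_of_def)
  qed
  also have "\<dots> = Xg g"
    unfolding Xg_eq_tight_face by (rule convex_hull_eq[THEN iffD2, OF convex_tight_face])
  finally have "outer_edge \<in> face_edges R" by (rule outer_edge_in_face_edges)
  moreover have "face_edges R = T - {outer_edge}"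
    unfolding R_def using face_edges_tight_face[of u "T - {outer_edge}"] u assms Xg_subset_Xbar by auto
  ultimately show False by simp
qed

lemma extreme_ray_of_Xbar_iff:
  "extreme_ray_of R (Xbar g) \<longleftrightarrow> (\<exists>T. nca_tree T \<and> R = tight_face (T - {outer_edge}))"
proof
  assume "extreme_ray_of R (Xbar g)"
  then have R: "R face_of Xbar g" "aff_dim R = 1" "\<not> bounded R" "R \<noteq> {}"
    by (auto simp: extreme_ray_of_def)
  obtain u where u: "u \<in> Xg g" "face_edges R \<subseteq> Eset g u" "nca_tree (Eset g u)"
    using face_contains_tree_point[OF R(1,4)] by metis
  define S T where "S = face_edges R" and "T = Eset g u"
  have "R = tight_face S" using face_eq_tight_face[OF R(1,4)] by (simp add: S_def)
  then have "card (T - S) = 1"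
    using aff_dim_tight_face[of u S] R(2) u Xg_subset_Xbar by (auto simp: S_def T_def)
  then obtain e where e: "T - S = {e}" by (auto simp: card_1_singleton_iff)
  have "outer_edge \<in> T" using u(1) by (simp add: T_def Xg_eq_tight_face tight_face_def)
  have "e = outer_edge"
  proof (rule ccontr)
    assume "e \<noteq> outer_edge"
    then have "outer_edge \<notin> T - S" using e by auto
    then have "outer_edge \<in> S" using \<open>outer_edge \<in> T\<close> by blast
    then have "R \<subseteq> Xg g"
      unfolding Xg_eq_tight_face \<open>R = tight_face S\<close> by (intro tight_face_antimono) simp
    then show False using R(3) bounded_Xg bounded_subset by blast
  qed
  then have "S = T - {outer_edge}" using e u(2) by (auto simp: S_def T_def)
  then show "\<exists>T. nca_tree T \<and> R = tight_face (T - {outer_edge})"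
    using \<open>R = tight_face S\<close> u(3) by (auto simp: T_def)
next
  assume "\<exists>T. nca_tree T \<and> R = tight_face (T - {outer_edge})"
  then obtain T where T: "nca_tree T" "R = tight_face (T - {outer_edge})" by blast
  obtain u where u: "u \<in> Xg g" "Eset g u = T" using nca_tree_realized[OF T(1)] .
  have "T - (T - {outer_edge}) = {outer_edge}" using first_last_in_nca_tree[OF T(1)] by auto
  then have "aff_dim R = 1"
    using aff_dim_tight_face[of u "T - {outer_edge}"] T u Xg_subset_Xbar by auto
  then show "extreme_ray_of R (Xbar g)"
    using T tight_face_face_of unbounded_tight_face_tree_minus_outer_edge
    by (simp add: extreme_ray_of_def)
qed

lemma bij_betw_face_edges_rays:
  "bij_betw face_edges {R. extreme_ray_of R (Xbar g)} ((\<lambda>T. T - {outer_edge}) ` {T. nca_tree T})"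
proof (rule bij_betw_imageI)
  show "inj_on face_edges {R. extreme_ray_of R (Xbar g)}"
  proof (rule inj_onI)
    fix R R' assume "R \<in> {R. extreme_ray_of R (Xbar g)}" "R' \<in> {R. extreme_ray_of R (Xbar g)}"
      and eq: "face_edges R = face_edges R'"
    then have "R face_of Xbar g" "R \<noteq> {}" "R' face_of Xbar g" "R' \<noteq> {}"
      using aff_dim_empty[of R] aff_dim_empty[of R'] by (auto simp: extreme_ray_of_def)
    then show "R = R'"
      using face_eq_tight_face[of R] face_eq_tight_face[of R'] eq by simp
  qed
  have edges: "face_edges (tight_face (T - {outer_edge})) = T - {outer_edge}"
    if T: "nca_tree T" for T :: "('n \<times> 'n) set"
  proof -
    obtain u where "u \<in> Xg g" "Eset g u = T" using nca_tree_realized[OF T] .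
    then show ?thesis using face_edges_tight_face[of u "T - {outer_edge}"] T Xg_subset_Xbar by auto
  qed
  have rays: "{R. extreme_ray_of R (Xbar g)} = (\<lambda>T. tight_face (T - {outer_edge})) ` {T. nca_tree T}"
    by (auto simp: extreme_ray_of_Xbar_iff)
  show "face_edges ` {R. extreme_ray_of R (Xbar g)} = (\<lambda>T. T - {outer_edge}) ` {T. nca_tree T}"
    unfolding rays image_image using edges by (intro image_cong) auto
qed

lemma bij_betw_face_edges_faces:
  "bij_betw face_edges {F. F face_of Xg g \<and> F \<noteq> {}} {S. nca_graph S \<and> outer_edge \<in> S}"
proof (rule bij_betw_imageI)
  show "inj_on face_edges {F. F face_of Xg g \<and> F \<noteq> {}}"
  proof (rule inj_onI)
    fix F F' assume "F \<in> {F. F face_of Xg g \<and> F \<noteq> {}}" "F' \<in> {F. F face_of Xg g \<and> F \<noteq> {}}"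
      and eq: "face_edges F = face_edges F'"
    then have "F face_of Xbar g" "F \<noteq> {}" "F' face_of Xbar g" "F' \<noteq> {}"
      by (auto simp: face_of_Xg_iff)
    then show "F = F'" using face_eq_tight_face[of F] face_eq_tight_face[of F'] eq by simp
  qed
  show "face_edges ` {F. F face_of Xg g \<and> F \<noteq> {}} = {S. nca_graph S \<and> outer_edge \<in> S}"
  proof (intro subset_antisym subsetI)
    fix S assume "S \<in> face_edges ` {F. F face_of Xg g \<and> F \<noteq> {}}"
    then obtain F where "F face_of Xbar g" "F \<subseteq> Xg g" "F \<noteq> {}" "S = face_edges F"
      by (auto simp: face_of_Xg_iff)
    then show "S \<in> {S. nca_graph S \<and> outer_edge \<in> S}"
      using face_edges_nca_graph outer_edge_in_face_edges by blast
  next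
    fix S :: "('n \<times> 'n) set" assume "S \<in> {S. nca_graph S \<and> outer_edge \<in> S}"
    then have S: "nca_graph S" "outer_edge \<in> S" by auto
    obtain u where u: "u \<in> Xg g" "S \<subseteq> Eset g u" "nca_tree (Eset g u)"
      using exists_tree_point[OF S(1)] .
    have "tight_face S \<subseteq> Xg g"
      unfolding Xg_eq_tight_face using S(2) by (intro tight_face_antimono) simp
    moreover have "u \<in> tight_face S" using u Xg_subset_Xbar by (auto simp: tight_face_def)
    moreover have "face_edges (tight_face S) = S"
      using face_edges_tight_face[of u S] u Xg_subset_Xbar by auto
    ultimately show "S \<in> face_edges ` {F. F face_of Xg g \<and> F \<noteq> {}}"
      using tight_face_face_of[of S] by (auto simp: face_of_Xg_iff intro!: image_eqI[of _ _ "tight_face S"])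
  qed
qed

lemma face_subset_iff_face_edges:
  assumes "F face_of Xbar g" "F \<noteq> {}" "F' face_of Xbar g" "F' \<noteq> {}"
  shows "F \<subseteq> F' \<longleftrightarrow> face_edges F' \<subseteq> face_edges F"
proof
  assume "face_edges F' \<subseteq> face_edges F"
  then have "tight_face (face_edges F) \<subseteq> tight_face (face_edges F')" by (rule tight_face_antimono)
  then show "F \<subseteq> F'"
    using face_eq_tight_face[OF assms(1,2)] face_eq_tight_face[OF assms(3,4)] by simp
qed (auto simp: face_edges_def)

lemma face_poset_iso_Xg: "face_poset_iso (Xg g) (assoc_faces CARD('n))"
proof -
  define \<phi> where "\<phi> = (\<lambda>S. diagonal_of ` (S - {outer_edge})) \<circ> face_edges"
  have "bij_betw \<phi> {F. F face_of Xg g \<and> F \<noteq> {}} (assoc_faces CARD('n))"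
    unfolding \<phi>_def using bij_betw_face_edges_faces bij_betw_assoc_faces[OF card_ge_2]
    by (rule bij_betw_trans)
  moreover have "F \<subseteq> F' \<longleftrightarrow> \<phi> F' \<subseteq> \<phi> F"
    if "F face_of Xg g" "F \<noteq> {}" "F' face_of Xg g" "F' \<noteq> {}" for F F'
  proof -
    have "outer_edge \<in> face_edges F" "outer_edge \<in> face_edges F'"
      using that outer_edge_in_face_edges face_of_imp_subset by blast+
    then have "face_edges F' \<subseteq> face_edges F \<longleftrightarrow> \<phi> F' \<subseteq> \<phi> F"
      by (auto simp: \<phi>_def inj_image_subset_iff[OF inj_diagonal_of])
    then show ?thesis using face_subset_iff_face_edges that by (simp add: face_of_Xg_iff)
  qed
  ultimately show ?thesis unfolding face_poset_iso_def by blast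
qed

end

theorem theorem5p9:
  fixes g :: "'n::{finite,linorder} \<Rightarrow> 'n \<Rightarrow> real"
  assumes "CARD('n) \<ge> 2"
    and "\<forall>i j k l. i < j \<and> j < k \<and> k < l \<longrightarrow> g i l + g j k > g i k + g j l"
    and "\<forall>i k l. i < k \<and> k < l \<longrightarrow> g i l > g i k + g k l"
  shows "simple_polytope (Xg g)
    \<and> aff_dim (Xg g) = int CARD('n) - 2
    \<and> face_poset_iso (Xg g) (assoc_faces CARD('n))
    \<and> bij_betw (Eset g) {v. v extreme_point_of Xg g} {T. nca_tree T}
    \<and> (\<forall>u w. u extreme_point_of Xg g \<and> w extreme_point_of Xg g \<longrightarrow>
         (adjacent_vertices (Xg g) u w \<longleftrightarrow>
            card (Eset g u - Eset g w) = 1 \<and> card (Eset g w - Eset g u) = 1))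
    \<and> polyhedron (Xbar g) \<and> \<not> bounded (Xbar g)
    \<and> {v. v extreme_point_of Xbar g} = {v. v extreme_point_of Xg g}
    \<and> bij_betw (\<lambda>R. \<Inter>v\<in>R. Eset g v) {R. extreme_ray_of R (Xbar g)}
         ((\<lambda>T. T - {(first_idx, last_idx)}) ` {T. nca_tree T})"
proof -
  interpret assoc_weights g
    using assms by unfold_locales auto
  have "(\<lambda>R. \<Inter>v\<in>R. Eset g v) = face_edges"
    by (simp add: fun_eq_iff face_edges_def)
  moreover have "{v. v extreme_point_of Xbar g} = {v. v extreme_point_of Xg g}"
    by (simp add: extreme_point_of_Xg_iff)
  ultimately show ?thesis
    using simple_polytope_Xg aff_dim_Xg face_poset_iso_Xg bij_betw_Eset_vertices
      adjacent_vertices_Xg_iff polyhedron_Xbar unbounded_Xbar bij_betw_face_edges_rays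
    by simp
qed

end
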